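(* Let $X$ be a polyhedron, let $F=\{A_1,\dots,A_m\}$ be a polyhedral cover of $X$, let $N=N(F)$ be its nerve, and let $k\ge 0$ be an integer. Suppose that for every simplex $\sigma\in N^{(k)}$, $$\tilde H_{k-|\sigma|+1}\Big(\bigcap_{i\in\sigma}A_i\Big)=0 .$$ Then 1. $\operatorname{Rank}\tilde H_{k+1}(N)\le \operatorname{Rank}\tilde H_{k+1}(X)$, and 2. $\operatorname{Rank}\tilde H_{k}(X)\le \operatorname{Rank}\tilde H_{k}(N)$.
   Context: All homology is reduced homology $\tilde H_*$ with coefficients in a fixed field, and $\operatorname{Rank}$ denotes dimension over that field. By convention, $\tilde H_{-1}(A)=0$ means that $A$ is nonempty. A polyhedral cover of a polyhedron $X$ is a finite family $F=\{A_1,\dots,A_m\}$ of subpolyhedra of $X$ with $\bigcup_{i=1}^m A_i=X$. The nerve $N(F)$ is the simplicial complex on vertex set $\{1,\dots,m\}$ whose simplices are the nonempty sets $\sigma\subset\{1,\dots,m\}$ with $\bigcap_{i\in\sigma}A_i\neq\emptyset$. $N^{(k)}$ denotes the $k$-skeleton of $N$, i.e. the simplices $\sigma$ with $|\sigma|\le k+1$, where $|\sigma|$ is the number of vertices of $\sigma$. *)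

theory Defs
  imports Complex_Main "HOL-Library.Function_Algebras"
begin

text \<open>The empty face plays the role of the
  (-1)-dimensional simplex, so the chain complex below is the augmented one
  and its homology is reduced homology. The empty space is the complex
  with only the empty face, whose reduced homology in degree -1 is the field.\<close>

definition simplicial_complex :: "'v set set \<Rightarrow> bool" where
  "simplicial_complex K \<longleftrightarrow> finite K \<and> {} \<in> K \<and> (\<forall>\<sigma>\<in>K. finite \<sigma>)
     \<and> (\<forall>\<sigma>\<in>K. \<forall>\<tau>. \<tau> \<subseteq> \<sigma> \<longrightarrow> \<tau> \<in> K)"

definition subcomplex :: "'v set set \<Rightarrow> 'v set set \<Rightarrow> bool" where
  "subcomplex L K \<longleftrightarrow> simplicial_complex L \<and> L \<subseteq> K"

definition chain_scale :: "'k::field \<Rightarrow> ('v set \<Rightarrow> 'k) \<Rightarrow> ('v set \<Rightarrow> 'k)" where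
  "chain_scale a c = (\<lambda>\<sigma>. a * c \<sigma>)"

lemma vector_space_chain_scale: "vector_space chain_scale"
  unfolding vector_space_def chain_scale_def by (auto simp: fun_eq_iff algebra_simps)

definition chains :: "'v set set \<Rightarrow> int \<Rightarrow> ('v set \<Rightarrow> 'k::field) set" where
  "chains K q = {c. \<forall>\<sigma>. c \<sigma> \<noteq> 0 \<longrightarrow> \<sigma> \<in> K \<and> int (card \<sigma>) = q + 1}"

text \<open>Simplicial boundary, orientation given by the linear order on vertices:
  the coefficient of face \<tau> in the boundary of \<tau> \<union> {v} is (-1)^(position of v).\<close>
definition boundary :: "('v::linorder) set set \<Rightarrow> ('v set \<Rightarrow> 'k::field) \<Rightarrow> ('v set \<Rightarrow> 'k)" where
  "boundary K c = (\<lambda>\<tau>. \<Sum>v \<in> (\<Union>K) - \<tau>. (-1) ^ card {u\<in>\<tau>. u < v} * c (insert v \<tau>))"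

definition cycles :: "('v::linorder) set set \<Rightarrow> int \<Rightarrow> ('v set \<Rightarrow> 'k::field) set" where
  "cycles K q = {c \<in> chains K q. boundary K c = (\<lambda>_. 0)}"

definition bounding :: "('v::linorder) set set \<Rightarrow> int \<Rightarrow> ('v set \<Rightarrow> 'k::field) set" where
  "bounding K q = boundary K ` chains K (q + 1)"

definition reduced_betti :: "'k::field itself \<Rightarrow> ('v::linorder) set set \<Rightarrow> int \<Rightarrow> nat" where
  "reduced_betti TYPE('k) K q =
     vector_space.dim (chain_scale :: 'k \<Rightarrow> _) (cycles K q :: ('v set \<Rightarrow> 'k) set)
   - vector_space.dim (chain_scale :: 'k \<Rightarrow> _) (bounding K q :: ('v set \<Rightarrow> 'k) set)"

definition inter_family :: "(nat \<Rightarrow> 'v set set) \<Rightarrow> nat set \<Rightarrow> 'v set set" where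
  "inter_family A \<sigma> = (\<Inter>i\<in>\<sigma>. A i)"

text \<open>Nerve of the cover A_0,...,A_{m-1} (augmented: contains the empty face).
  A nonempty \<sigma> is a simplex iff the intersection is a nonempty space,
  i.e. contains a nonempty face.\<close>
definition nerve :: "nat \<Rightarrow> (nat \<Rightarrow> 'v set set) \<Rightarrow> nat set set" where
  "nerve m A = {\<sigma>. \<sigma> \<subseteq> {0..<m} \<and> (\<sigma> = {} \<or> (\<exists>f \<in> inter_family A \<sigma>. f \<noteq> {}))}"

end

(*
  Consider the augmented double complex generated by the pairs (sigma, s) with sigma a face of
  the nerve, |sigma| = p + 1, and s a face of A_sigma with |s| = q + 1, where A_{} = X; the
  horizontal differential is the boundary in the nerve, the vertical one the boundary in X.
  Column -1 is the augmented chain complex of X and row -1 that of N.  Each row q >= 0 is exact: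
  for a fixed face s it is the augmented chain complex of the full simplex on the indices i with
  s in A_i.  Hence zigzags through the double complex define a linear map from the cycles of X
  to the cycles of N taking boundaries to boundaries.  The hypothesis makes the columns exact
  along the antidiagonal p + q = k, and a diagram chase shows that the induced map on homology
  is injective in degree k and surjective in degree k + 1; comparing dimensions gives both
  inequalities.
*)

theory Submission
  imports Defs
begin

section \<open>Finite-dimensional subspaces\<close>

definition finite_dimensional :: "('a::field \<Rightarrow> 'b::ab_group_add \<Rightarrow> 'b) \<Rightarrow> 'b set \<Rightarrow> bool" where
  "finite_dimensional s V \<longleftrightarrow> (\<exists>F. finite F \<and> V \<subseteq> module.span s F)"

context vector_space
begin

lemma finite_dimensional_subset: "finite_dimensional scale W \<Longrightarrow> V \<subseteq> W \<Longrightarrow> finite_dimensional scale V"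
  unfolding finite_dimensional_def by blast

lemma finite_dimensional_independent:
  assumes "finite_dimensional scale V" "B \<subseteq> V" "independent B"
  shows "finite B" "card B \<le> dim V"
proof -
  obtain C where C: "B \<subseteq> C" "C \<subseteq> V" "independent C" "V \<subseteq> span C"
    using maximal_independent_subset_extend[OF assms(2,3)] by blast
  obtain F where "finite F" "V \<subseteq> span F"
    using assms(1) unfolding finite_dimensional_def by blast
  then have "finite C"
    using independent_span_bound[OF _ C(3)] C(2) by blast
  then show "finite B"
    using C(1) finite_subset by blast
  show "card B \<le> dim V"
    using card_mono[OF \<open>finite C\<close> C(1)] basis_card_eq_dim[OF C(2,4,3)] by simp
qed

lemma finite_dimensional_extend_basis:
  assumes "finite_dimensional scale V" "B \<subseteq> V" "independent B"
  obtains C where "B \<subseteq> C" "C \<subseteq> V" "independent C" "V \<subseteq> span C" "finite C" "card C = dim V"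
proof -
  obtain C where C: "B \<subseteq> C" "C \<subseteq> V" "independent C" "V \<subseteq> span C"
    using maximal_independent_subset_extend[OF assms(2,3)] by blast
  show ?thesis
    using that[OF C finite_dimensional_independent(1)[OF assms(1) C(2,3)] basis_card_eq_dim[OF C(2,4,3)]] .
qed

lemma finite_dimensional_basis:
  assumes "finite_dimensional scale V"
  obtains B where "B \<subseteq> V" "independent B" "V \<subseteq> span B" "finite B" "card B = dim V"
  by (rule finite_dimensional_extend_basis[OF assms empty_subsetI independent_empty]) (rule that)

lemma dim_mono_finite_dimensional:
  assumes "finite_dimensional scale W" "V \<subseteq> W"
  shows "dim V \<le> dim W"
proof -
  obtain B where "B \<subseteq> V" "independent B" "V \<subseteq> span B" "card B = dim V"
    by (rule basis_exists)
  then show ?thesis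
    using finite_dimensional_independent(2)[OF assms(1), of B] assms(2) by simp
qed

lemma finite_dimensional_image:
  assumes "Vector_Spaces.linear scale scale f" "finite_dimensional scale S"
  shows "finite_dimensional scale (f ` S)"
proof -
  interpret f: Vector_Spaces.linear scale scale f by fact
  obtain F where "finite F" "S \<subseteq> span F"
    using assms(2) unfolding finite_dimensional_def by blast
  then have "f ` S \<subseteq> span (f ` F)"
    using f.spans_image by blast
  then show ?thesis
    using \<open>finite F\<close> unfolding finite_dimensional_def by blast
qed

lemma subset_subspace_if_dim_le:
  assumes "subspace B" "B \<subseteq> Z" "finite_dimensional scale Z" "dim Z \<le> dim B"
  shows "Z \<subseteq> B"
proof -
  obtain b where b: "b \<subseteq> B" "independent b" "B \<subseteq> span b" "finite b" "card b = dim B"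
    by (rule finite_dimensional_basis[OF finite_dimensional_subset[OF assms(3,2)]])
  have "b \<subseteq> Z"
    using b(1) assms(2) by blast
  obtain C where C: "b \<subseteq> C" "C \<subseteq> Z" "independent C" "Z \<subseteq> span C" "finite C" "card C = dim Z"
    by (rule finite_dimensional_extend_basis[OF assms(3) \<open>b \<subseteq> Z\<close> b(2)])
  have "C = b"
    using card_seteq[OF C(5) C(1)] C(6) b(5) assms(4) by simp
  then show ?thesis
    using C(4) span_minimal[OF b(1) assms(1)] by blast
qed

lemma span_Int_span_eq_zero:
  assumes "finite A" "independent (A \<union> B)" "A \<inter> B = {}"
  shows "span A \<inter> span B = {0}"
  using assms
proof (induction A rule: finite_induct)
  case empty
  then show ?case by (auto simp: span_empty span_zero)
next
  case (insert a A)
  have a: "a \<notin> span (A \<union> B)" and indep: "independent (A \<union> B)"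
    using insert.hyps insert.prems independent_insert[of a "A \<union> B"] by auto
  have "x = 0" if x: "x \<in> span (insert a A)" "x \<in> span B" for x
  proof -
    obtain c where c: "x - c *s a \<in> span A"
      using x(1) span_breakdown_eq by blast
    have "c *s a \<in> span (A \<union> B)"
      using span_diff[OF span_mono[of B "A \<union> B", THEN subsetD, OF _ x(2)]
          span_mono[of A "A \<union> B", THEN subsetD, OF _ c]] by simp
    then have "c = 0"
      using a span_scale[of "c *s a" "A \<union> B" "inverse c"] by (cases "c = 0") auto
    then show "x = 0"
      using insert.IH[OF indep] insert.prems c x(2) by auto
  qed
  then show ?case
    using span_zero by blast
qed

lemma span_Diff_Int_span_eq_zero:
  assumes "independent C" "finite C" "B \<subseteq> C"
  shows "span (C - B) \<inter> span B = {0}"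
proof -
  have "independent (C - B \<union> B)"
    using assms(1,3) by (simp add: Un_absorb2)
  then show ?thesis
    using span_Int_span_eq_zero[of "C - B" B] assms(2) by blast
qed

lemma span_Diff_decompose:
  assumes "B \<subseteq> C" "x \<in> span C"
  obtains y z where "y \<in> span B" "z \<in> span (C - B)" "x = y + z"
proof -
  have "span C = span (B \<union> (C - B))"
    using assms(1) by (metis Un_Diff_cancel Un_absorb1)
  also have "\<dots> = {y + z | y z. y \<in> span B \<and> z \<in> span (C - B)}"
    by (rule span_Un)
  finally show ?thesis
    using assms(2) that by blast
qed

lemma notin_span_Un_if_span_Int_eq_zero:
  assumes A: "independent A" "a \<in> A" and AB: "span A \<inter> span B = {0}"
  shows "a \<notin> span (A \<union> B - {a})"
proof
  assume a: "a \<in> span (A \<union> B - {a})"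
  have "a \<notin> B"
  proof
    assume "a \<in> B"
    then have "a = 0"
      using span_base[OF A(2)] span_base[of a B] AB by blast
    then show False
      using A dependent_zero by blast
  qed
  then have "A \<union> B - {a} = (A - {a}) \<union> B"
    by blast
  then obtain x y where xy: "a = x + y" "x \<in> span (A - {a})" "y \<in> span B"
    using a span_Un[of "A - {a}" B] by auto
  have "y = a - x"
    using xy(1) by simp
  moreover have "x \<in> span A"
    using xy(2) span_mono[of "A - {a}" A] by blast
  ultimately have "y = 0"
    using span_diff[OF span_base[OF A(2)]] AB xy(3) by blast
  then show False
    using xy A unfolding dependent_def by auto
qed

lemma independent_Un_if_span_Int_eq_zero:
  assumes "independent A" "independent B" "span A \<inter> span B = {0}"
  shows "independent (A \<union> B)"
  unfolding dependent_def
proof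
  assume "\<exists>a\<in>A \<union> B. a \<in> span (A \<union> B - {a})"
  then obtain a where a: "a \<in> A \<union> B" "a \<in> span (A \<union> B - {a})"
    by blast
  have "span B \<inter> span A = {0}"
    using assms(3) by blast
  then have "a \<notin> B"
    using notin_span_Un_if_span_Int_eq_zero[OF assms(2)] a(2) by (metis Un_commute)
  then show False
    using notin_span_Un_if_span_Int_eq_zero[OF assms(1) _ assms(3)] a by blast
qed

lemma independent_Diff_Un:
  assumes S: "subspace S" and T: "subspace T"
    and C: "independent C" "finite C" "C \<subseteq> S" and B: "B \<subseteq> C" "S \<inter> T \<subseteq> span B"
    and D: "independent D" "D \<subseteq> T"
  shows "independent (C - B \<union> D)" "(C - B) \<inter> D = {}"
proof -
  have CB: "span (C - B) \<inter> span B = {0}"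
    by (rule span_Diff_Int_span_eq_zero[OF C(1,2) B(1)])
  have "x = 0" if "x \<in> span (C - B)" "x \<in> span D" for x
  proof -
    have "x \<in> S \<inter> T"
      using that span_minimal[OF _ S, of "C - B"] span_minimal[OF D(2) T] C(3) by auto
    then show "x = 0"
      using that(1) B(2) CB by blast
  qed
  then have CD: "span (C - B) \<inter> span D = {0}"
    using span_zero by blast
  show "independent (C - B \<union> D)"
    by (rule independent_Un_if_span_Int_eq_zero[OF independent_mono[OF C(1) Diff_subset] D(1) CD])
  have "x = 0" if "x \<in> C - B" "x \<in> D" for x
    using CD span_base[OF that(1)] span_base[OF that(2)] by blast
  then show "(C - B) \<inter> D = {}"
    using D(1) dependent_zero by blast
qed

lemma dim_sums_Int_finite_dimensional:
  assumes S: "subspace S" "finite_dimensional scale S" and T: "subspace T" "finite_dimensional scale T"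
  shows "dim {x + y | x y. x \<in> S \<and> y \<in> T} + dim (S \<inter> T) = dim S + dim T"
proof -
  let ?ST = "{x + y | x y. x \<in> S \<and> y \<in> T}"
  obtain B where B: "B \<subseteq> S \<inter> T" "independent B" "S \<inter> T \<subseteq> span B" "finite B" "card B = dim (S \<inter> T)"
    by (rule finite_dimensional_basis[OF finite_dimensional_subset[OF S(2) Int_lower1]])
  have "B \<subseteq> S"
    using B(1) by blast
  obtain C where C: "B \<subseteq> C" "C \<subseteq> S" "independent C" "S \<subseteq> span C" "finite C" "card C = dim S"
    by (rule finite_dimensional_extend_basis[OF S(2) \<open>B \<subseteq> S\<close> B(2)])
  obtain D where D: "D \<subseteq> T" "independent D" "T \<subseteq> span D" "finite D" "card D = dim T"
    by (rule finite_dimensional_basis[OF T(2)])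
  note E = independent_Diff_Un[OF S(1) T(1) C(3,5,2) C(1) B(3) D(2,1)]
  have "C - B \<union> D \<subseteq> ?ST"
    using C(2) D(1) subspace_0[OF S(1)] subspace_0[OF T(1)] by force
  moreover have "x + y \<in> span (C - B \<union> D)" if "x \<in> S" "y \<in> T" for x y
  proof -
    have "x \<in> span C"
      using that(1) C(4) by blast
    then obtain x1 x2 where x: "x1 \<in> span B" "x2 \<in> span (C - B)" "x = x1 + x2"
      by (rule span_Diff_decompose[OF C(1)])
    have "x1 \<in> T"
      using x(1) span_minimal[of B T] B(1) T(1) by blast
    then have "x1 + y \<in> span D"
      using that(2) D(3) T(1) subspace_add by blast
    moreover have "x + y = x2 + (x1 + y)"
      using x(3) by (simp add: algebra_simps)
    ultimately show ?thesis
      unfolding span_Un using x(2) by blast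
  qed
  ultimately have "card (C - B \<union> D) = dim ?ST"
    using basis_card_eq_dim E(1) by blast
  moreover have "card (C - B \<union> D) = card C - card B + card D"
    using card_Un_disjoint[OF _ D(4) E(2)] card_Diff_subset[OF B(4) C(1)] C(5) by simp
  ultimately show ?thesis
    using card_mono[OF C(5,1)] B(5) C(6) D(5) by linarith
qed

lemma rank_nullity_finite_dimensional:
  assumes f: "Vector_Spaces.linear scale scale f" and S: "subspace S" "finite_dimensional scale S"
  shows "dim S = dim {x \<in> S. f x = 0} + dim (f ` S)"
proof -
  interpret f: Vector_Spaces.linear scale scale f by fact
  let ?K = "{x \<in> S. f x = 0}"
  have K: "subspace ?K" "?K \<subseteq> S"
    using S(1) unfolding subspace_def by (auto simp: f.add f.scale)
  obtain B where B: "B \<subseteq> ?K" "independent B" "?K \<subseteq> span B" "finite B" "card B = dim ?K"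
    by (rule finite_dimensional_basis[OF finite_dimensional_subset[OF S(2) K(2)]])
  have "B \<subseteq> S"
    using B(1) by blast
  obtain C where C: "B \<subseteq> C" "C \<subseteq> S" "independent C" "S \<subseteq> span C" "finite C" "card C = dim S"
    by (rule finite_dimensional_extend_basis[OF S(2) \<open>B \<subseteq> S\<close> B(2)])
  have "inj_on f (span (C - B))"
    unfolding f.inj_on_iff_eq_0[OF subspace_span]
    using span_Diff_Int_span_eq_zero[OF C(3,5,1)] B(3) span_minimal[OF _ S(1), of "C - B"] C(2) by blast
  note inj = this inj_on_subset[OF this span_superset]
  have "f x \<in> span (f ` (C - B))" if "x \<in> S" for x
  proof -
    have "x \<in> span C"
      using that C(4) by blast
    then obtain x1 x2 where x: "x1 \<in> span B" "x2 \<in> span (C - B)" "x = x1 + x2"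
      by (rule span_Diff_decompose[OF C(1)])
    have "f x1 = 0"
      using x(1) span_minimal[OF B(1) K(1)] by blast
    then show ?thesis
      using x(2,3) f.add f.span_image by auto
  qed
  then have "card (f ` (C - B)) = dim (f ` S)"
    using basis_card_eq_dim[of "f ` (C - B)" "f ` S"] C(2)
      f.independent_injective_image[OF independent_mono[OF C(3)] inj(1)] by blast
  moreover have "card (f ` (C - B)) = card C - card B"
    using card_image[OF inj(2)] card_Diff_subset[OF B(4) C(1)] by simp
  ultimately show ?thesis
    using B(5) C(6) card_mono[OF C(5,1)] by linarith
qed

lemma dim_add_eq_dim_preimage_add_dim_sums:
  assumes f: "Vector_Spaces.linear scale scale f"
    and S: "subspace S" "finite_dimensional scale S" and T: "subspace T" "finite_dimensional scale T"
  shows "dim S + dim T = dim {x \<in> S. f x \<in> T} + dim {y + t | y t. y \<in> f ` S \<and> t \<in> T}"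
proof -
  interpret f: Vector_Spaces.linear scale scale f by fact
  let ?P = "{x \<in> S. f x \<in> T}"
  have P: "subspace ?P" "?P \<subseteq> S"
    using S(1) T(1) unfolding subspace_def by (auto simp: f.add f.scale)
  have fS: "subspace (f ` S)" "finite_dimensional scale (f ` S)"
    using f.subspace_image[OF S(1)] finite_dimensional_image[OF f S(2)] by blast+
  have K: "{x \<in> ?P. f x = 0} = {x \<in> S. f x = 0}"
    using subspace_0[OF T(1)] by auto
  have I: "f ` ?P = f ` S \<inter> T"
    by auto
  have "dim S = dim {x \<in> S. f x = 0} + dim (f ` S)"
    by (rule rank_nullity_finite_dimensional[OF f S])
  moreover have "dim ?P = dim {x \<in> S. f x = 0} + dim (f ` S \<inter> T)"
    using rank_nullity_finite_dimensional[OF f P(1) finite_dimensional_subset[OF S(2) P(2)]]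
    unfolding K I .
  moreover have "dim {y + t | y t. y \<in> f ` S \<and> t \<in> T} + dim (f ` S \<inter> T) = dim (f ` S) + dim T"
    by (rule dim_sums_Int_finite_dimensional[OF fS T])
  ultimately show ?thesis
    by linarith
qed

lemma quotient_dim_le_if_inj:
  assumes f: "Vector_Spaces.linear scale scale f"
    and Z1: "subspace Z1" "finite_dimensional scale Z1" and Z2: "subspace Z2" "finite_dimensional scale Z2"
    and B2: "subspace B2" "B2 \<subseteq> Z2" and B1: "B1 \<subseteq> Z1" "f ` B1 \<subseteq> B2" and "f ` Z1 \<subseteq> Z2"
    and inj: "\<And>z. z \<in> Z1 \<Longrightarrow> f z \<in> B2 \<Longrightarrow> z \<in> B1"
  shows "dim Z1 + dim B2 \<le> dim Z2 + dim B1"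
proof -
  let ?sum = "{y + b | y b. y \<in> f ` Z1 \<and> b \<in> B2}"
  have "{x \<in> Z1. f x \<in> B2} = B1"
    using inj B1 by auto
  then have "dim Z1 + dim B2 = dim B1 + dim ?sum"
    using dim_add_eq_dim_preimage_add_dim_sums[OF f Z1 B2(1) finite_dimensional_subset[OF Z2(2) B2(2)]]
    by simp
  moreover have "?sum \<subseteq> Z2"
    using \<open>f ` Z1 \<subseteq> Z2\<close> B2(2) subspace_add[OF Z2(1)] by blast
  then have "dim ?sum \<le> dim Z2"
    by (rule dim_mono_finite_dimensional[OF Z2(2)])
  ultimately show ?thesis
    by linarith
qed

lemma quotient_dim_le_if_surj:
  assumes f: "Vector_Spaces.linear scale scale f"
    and Z1: "subspace Z1" "finite_dimensional scale Z1" and Z2: "subspace Z2" "finite_dimensional scale Z2"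
    and B2: "subspace B2" "B2 \<subseteq> Z2" and B1: "B1 \<subseteq> Z1" "f ` B1 \<subseteq> B2" and "f ` Z1 \<subseteq> Z2"
    and surj: "\<And>z. z \<in> Z2 \<Longrightarrow> \<exists>x\<in>Z1. z - f x \<in> B2"
  shows "dim Z2 + dim B1 \<le> dim Z1 + dim B2"
proof -
  let ?P = "{x \<in> Z1. f x \<in> B2}"
  let ?sum = "{y + b | y b. y \<in> f ` Z1 \<and> b \<in> B2}"
  have "Z2 \<subseteq> ?sum"
  proof
    fix z assume "z \<in> Z2"
    then obtain x where "x \<in> Z1" "z - f x \<in> B2"
      using surj by blast
    moreover have "z = f x + (z - f x)"
      by simp
    ultimately show "z \<in> ?sum"
      by blast
  qed
  moreover have "?sum \<subseteq> Z2"
    using \<open>f ` Z1 \<subseteq> Z2\<close> B2(2) subspace_add[OF Z2(1)] by blast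
  ultimately have "dim Z2 \<le> dim ?sum"
    using dim_mono_finite_dimensional[OF finite_dimensional_subset[OF Z2(2)]] by blast
  moreover have "dim Z1 + dim B2 = dim ?P + dim ?sum"
    by (rule dim_add_eq_dim_preimage_add_dim_sums[OF f Z1 B2(1) finite_dimensional_subset[OF Z2(2) B2(2)]])
  moreover have "dim B1 \<le> dim ?P"
    by (rule dim_mono_finite_dimensional[OF finite_dimensional_subset[OF Z1(2)]]) (use B1 in auto)
  ultimately show ?thesis
    by linarith
qed

end

lemma dim_image_eq_if_inj:
  assumes "vector_space s1" "vector_space s2" "Vector_Spaces.linear s1 s2 f" "inj f"
  shows "vector_space.dim s2 (f ` S) = vector_space.dim s1 S"
proof -
  interpret vector_space_pair s1 s2
    using assms by (simp add: vector_space_pair_def)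
  interpret f: Vector_Spaces.linear s1 s2 f by fact
  obtain B where B: "B \<subseteq> S" "vs1.independent B" "S \<subseteq> vs1.span B" "card B = vs1.dim S"
    by (rule vs1.basis_exists)
  have "vs2.independent (f ` B)"
    using f.independent_injective_image[OF B(2)] inj_on_subset[OF assms(4)] by blast
  then have "card (f ` B) = vs2.dim (f ` S)"
    using vs2.basis_card_eq_dim[OF image_mono[OF B(1)] f.spans_image[OF B(3)]] by blast
  then show ?thesis
    using card_image[OF inj_on_subset[OF assms(4)]] B(4) by simp
qed

section \<open>Double complexes and zigzags\<close>

text \<open>Indices start at -1: column -1 and row -1 carry the two augmented edge complexes. The
  differentials commute rather than anticommute, since no total complex is formed.\<close>

locale double_complex = vector_space scale
  for scale :: "'a::field \<Rightarrow> 'b::ab_group_add \<Rightarrow> 'b" +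
  fixes D :: "int \<Rightarrow> int \<Rightarrow> 'b set" and dh dv :: "'b \<Rightarrow> 'b"
  assumes subspace_D: "subspace (D p q)"
    and finite_dimensional_D: "finite_dimensional scale (D p q)"
    and D_vanishes: "p < -1 \<or> q < -1 \<Longrightarrow> D p q = {0}"
    and linear_dh: "Vector_Spaces.linear scale scale dh"
    and linear_dv: "Vector_Spaces.linear scale scale dv"
    and dh_D: "x \<in> D p q \<Longrightarrow> dh x \<in> D (p - 1) q"
    and dv_D: "x \<in> D p q \<Longrightarrow> dv x \<in> D p (q - 1)"
    and dh_dh: "x \<in> D p q \<Longrightarrow> dh (dh x) = 0"
    and dv_dv: "x \<in> D p q \<Longrightarrow> dv (dv x) = 0"
    and dh_dv_commute: "x \<in> D p q \<Longrightarrow> dh (dv x) = dv (dh x)"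
begin

sublocale dh: Vector_Spaces.linear scale scale dh
  by (rule linear_dh)

sublocale dv: Vector_Spaces.linear scale scale dv
  by (rule linear_dv)

lemma double_complex_transpose: "double_complex scale (\<lambda>p q. D q p) dv dh"
  by unfold_locales
    (auto simp: subspace_D finite_dimensional_D D_vanishes dh_D dv_D dh_dh dv_dv dh_dv_commute)

lemma diff_D: "x \<in> D p q \<Longrightarrow> y \<in> D p q \<Longrightarrow> x - y \<in> D p q"
  using subspace_diff[OF subspace_D] .

lemma dh_column_minus1: "x \<in> D (-1) q \<Longrightarrow> dh x = 0"
  using dh_D[of x "-1" q] D_vanishes[of "-2" q] by simp

definition Zh :: "int \<Rightarrow> int \<Rightarrow> 'b set" where
  "Zh p q = {x \<in> D p q. dh x = 0}"

definition Bh :: "int \<Rightarrow> int \<Rightarrow> 'b set" where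
  "Bh p q = dh ` D (p + 1) q"

definition Zv :: "int \<Rightarrow> int \<Rightarrow> 'b set" where
  "Zv p q = {x \<in> D p q. dv x = 0}"

definition Bv :: "int \<Rightarrow> int \<Rightarrow> 'b set" where
  "Bv p q = dv ` D p (q + 1)"

definition Bvh :: "int \<Rightarrow> int \<Rightarrow> 'b set" where
  "Bvh p q = {a + b | a b. a \<in> Bv p q \<and> b \<in> Bh p q}"

definition row_exact :: "int \<Rightarrow> int \<Rightarrow> bool" where
  "row_exact p q \<longleftrightarrow> Zh p q \<subseteq> Bh p q"

definition col_exact :: "int \<Rightarrow> int \<Rightarrow> bool" where
  "col_exact p q \<longleftrightarrow> Zv p q \<subseteq> Bv p q"

definition zigzag :: "nat \<Rightarrow> (nat \<Rightarrow> 'b) \<Rightarrow> bool" where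
  "zigzag n y \<longleftrightarrow> (\<forall>j\<le>n. y j \<in> D (int j) (int n - int j)) \<and> (\<forall>j<n. dh (y (Suc j)) = dv (y j))"

lemma subspace_Zh: "subspace (Zh p q)"
  using subspace_D[of p q] unfolding Zh_def subspace_def by (auto simp: dh.add dh.scale)

lemma subspace_Zv: "subspace (Zv p q)"
  using subspace_D[of p q] unfolding Zv_def subspace_def by (auto simp: dv.add dv.scale)

lemma subspace_Bh: "subspace (Bh p q)"
  unfolding Bh_def by (rule dh.subspace_image[OF subspace_D])

lemma subspace_Bv: "subspace (Bv p q)"
  unfolding Bv_def by (rule dv.subspace_image[OF subspace_D])

lemma finite_dimensional_Zh: "finite_dimensional scale (Zh p q)"
  by (rule finite_dimensional_subset[OF finite_dimensional_D]) (auto simp: Zh_def)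

lemma finite_dimensional_Zv: "finite_dimensional scale (Zv p q)"
  by (rule finite_dimensional_subset[OF finite_dimensional_D]) (auto simp: Zv_def)

lemma Bh_subset_Zh: "Bh p q \<subseteq> Zh p q"
  unfolding Bh_def Zh_def using dh_D dh_dh by fastforce

lemma Bv_subset_Zv: "Bv p q \<subseteq> Zv p q"
  unfolding Bv_def Zv_def using dv_D dv_dv by fastforce

lemma Bv_subset_D: "Bv p q \<subseteq> D p q"
  using Bv_subset_Zv unfolding Zv_def by blast

lemma dv_Bvh_in_dh_Bv:
  assumes "y \<in> Bvh p q"
  shows "dv y \<in> dh ` Bv (p + 1) (q - 1)"
proof -
  obtain v w where vw: "v \<in> D p (q + 1)" "w \<in> D (p + 1) q" "y = dv v + dh w"
    using assms unfolding Bvh_def Bv_def Bh_def by blast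
  then have "dv y = dh (dv w)"
    by (simp add: dv.add dv_dv dh_dv_commute)
  moreover have "dv w \<in> Bv (p + 1) (q - 1)"
    using vw(2) unfolding Bv_def by simp
  ultimately show ?thesis
    by blast
qed

lemma Bvh_if_dh_in_dh_Bv:
  assumes "y \<in> D p q" "row_exact p q" "dh y \<in> dh ` Bv p q"
  shows "y \<in> Bvh p q"
proof -
  obtain b where b: "b \<in> Bv p q" "dh y = dh b"
    using assms(3) by blast
  moreover have "b \<in> D p q"
    using b(1) Bv_subset_D by blast
  ultimately have "y - b \<in> Zh p q"
    using assms(1) unfolding Zh_def by (simp add: diff_D dh.diff)
  then have "y - b \<in> Bh p q"
    using assms(2) unfolding row_exact_def by blast
  moreover have "y = b + (y - b)"
    by simp
  ultimately show ?thesis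
    using b(1) unfolding Bvh_def by blast
qed

lemma Bv_minus1_subset_dh_Bv:
  assumes "row_exact (-1) (q + 1)"
  shows "Bv (-1) q \<subseteq> dh ` Bv 0 q"
proof
  fix x assume "x \<in> Bv (-1) q"
  then obtain u where u: "u \<in> D (-1) (q + 1)" "x = dv u"
    unfolding Bv_def by blast
  then have "u \<in> Bh (-1) (q + 1)"
    using assms dh_column_minus1 unfolding row_exact_def Zh_def by blast
  then obtain v where v: "v \<in> D 0 (q + 1)" "u = dh v"
    unfolding Bh_def by auto
  then have "x = dh (dv v)"
    using u(2) dh_dv_commute by simp
  moreover have "dv v \<in> Bv 0 q"
    using v(1) unfolding Bv_def by blast
  ultimately show "x \<in> dh ` Bv 0 q"
    by blast
qed

lemma zigzag_in_Bvh:
  assumes y: "zigzag n y" "y 0 \<in> Bvh 0 (int n)"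
    and rows: "\<And>p. 0 < p \<Longrightarrow> p \<le> int n \<Longrightarrow> row_exact p (int n - p)"
  shows "j \<le> n \<Longrightarrow> y j \<in> Bvh (int j) (int n - int j)"
proof (induction j)
  case 0
  then show ?case using y(2) by simp
next
  case (Suc j)
  have "dv (y j) \<in> dh ` Bv (int (Suc j)) (int n - int (Suc j))"
    using dv_Bvh_in_dh_Bv[OF Suc.IH] Suc.prems by (simp add: add.commute diff_diff_eq)
  moreover have "dh (y (Suc j)) = dv (y j)" "y (Suc j) \<in> D (int (Suc j)) (int n - int (Suc j))"
    using y(1) Suc.prems unfolding zigzag_def by auto
  ultimately show ?case
    using Bvh_if_dh_in_dh_Bv rows[of "int (Suc j)"] Suc.prems by simp
qed

lemma zigzag_Bh_if_Bv:
  assumes y: "zigzag n y" "dh (y 0) \<in> Bv (-1) (int n)"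
    and rows: "\<And>p. -1 \<le> p \<Longrightarrow> p \<le> int n \<Longrightarrow> row_exact p (int n - p)"
  shows "dv (y n) \<in> Bh (int n) (-1)"
proof -
  have "dh (y 0) \<in> dh ` Bv 0 (int n)"
    using Bv_minus1_subset_dh_Bv rows[of "-1"] y(2) by auto
  moreover have "y 0 \<in> D 0 (int n)"
    using y(1) unfolding zigzag_def by force
  ultimately have "y 0 \<in> Bvh 0 (int n)"
    using Bvh_if_dh_in_dh_Bv rows[of 0] by simp
  moreover have "row_exact p (int n - p)" if "0 < p" "p \<le> int n" for p
    using rows that by simp
  ultimately have "y n \<in> Bvh (int n) 0"
    using zigzag_in_Bvh[OF y(1), of n] by simp
  then have "dv (y n) \<in> dh ` Bv (int n + 1) (-1)"
    using dv_Bvh_in_dh_Bv by fastforce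
  then show ?thesis
    using Bv_subset_D unfolding Bh_def by blast
qed

lemma zigzag_cong: "(\<And>j. j \<le> n \<Longrightarrow> y j = y' j) \<Longrightarrow> zigzag n y \<longleftrightarrow> zigzag n y'"
  unfolding zigzag_def by (metis Suc_leI less_imp_le)

lemma zigzag_diff: "zigzag n y \<Longrightarrow> zigzag n y' \<Longrightarrow> zigzag n (\<lambda>j. y j - y' j)"
  unfolding zigzag_def by (auto simp: diff_D dh.diff dv.diff)

lemma zigzag_cycle:
  assumes "zigzag n y" "dv (dh (y 0)) = 0"
  shows "dh (dv (y n)) = 0"
proof -
  have y: "\<And>j. j \<le> n \<Longrightarrow> y j \<in> D (int j) (int n - int j)"
    "\<And>j. j < n \<Longrightarrow> dh (y (Suc j)) = dv (y j)"
    using assms(1) unfolding zigzag_def by auto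
  show ?thesis
  proof (cases n)
    case 0
    then show ?thesis
      using assms(2) dh_dv_commute[OF y(1)] by simp
  next
    case (Suc m)
    then show ?thesis
      using dh_dv_commute[OF y(1)] y(2)[of m] dv_dv[OF y(1)[of m]] by simp
  qed
qed

definition lift :: "int \<Rightarrow> int \<Rightarrow> 'b \<Rightarrow> 'b" where
  "lift p q = (SOME g. range g \<subseteq> D p q \<and> Vector_Spaces.linear scale scale g
      \<and> (\<forall>v\<in>dh ` D p q. dh (g v) = v))"

lemma lift:
  "range (lift p q) \<subseteq> D p q" "Vector_Spaces.linear scale scale (lift p q)"
  "v \<in> dh ` D p q \<Longrightarrow> dh (lift p q v) = v"
proof -
  interpret vector_space_pair scale scale ..
  have "\<exists>g. range g \<subseteq> D p q \<and> Vector_Spaces.linear scale scale g \<and> (\<forall>v\<in>dh ` D p q. dh (g v) = v)"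
    by (rule linear_exists_right_inverse_on[OF linear_dh subspace_D])
  then have "range (lift p q) \<subseteq> D p q \<and> Vector_Spaces.linear scale scale (lift p q)
      \<and> (\<forall>v\<in>dh ` D p q. dh (lift p q v) = v)"
    unfolding lift_def by (rule someI_ex)
  then show "range (lift p q) \<subseteq> D p q" "Vector_Spaces.linear scale scale (lift p q)"
    "v \<in> dh ` D p q \<Longrightarrow> dh (lift p q v) = v"
    by blast+
qed

lemma dh_lift: "v \<in> Zh (p - 1) q \<Longrightarrow> row_exact (p - 1) q \<Longrightarrow> dh (lift p q v) = v"
  using lift(3) unfolding row_exact_def Bh_def by auto

text \<open>Lifting along fixed linear sections of \<open>dh\<close> makes the zigzag, hence the edge map, linear.\<close>

primrec canonical_zigzag :: "nat \<Rightarrow> nat \<Rightarrow> 'b \<Rightarrow> 'b" where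
  "canonical_zigzag n 0 x = lift 0 (int n) x"
| "canonical_zigzag n (Suc j) x = lift (int (Suc j)) (int n - int (Suc j)) (dv (canonical_zigzag n j x))"

lemma linear_canonical_zigzag: "Vector_Spaces.linear scale scale (canonical_zigzag n j)"
proof (induction j)
  case 0
  then show ?case
    using lift(2) by (simp add: fun_eq_iff[symmetric])
next
  case (Suc j)
  have "canonical_zigzag n (Suc j) = lift (int (Suc j)) (int n - int (Suc j)) \<circ> (dv \<circ> canonical_zigzag n j)"
    by (simp add: fun_eq_iff)
  moreover have "Vector_Spaces.linear scale scale
      (lift (int (Suc j)) (int n - int (Suc j)) \<circ> (dv \<circ> canonical_zigzag n j))"
    by (intro Vector_Spaces.linear_compose[OF Vector_Spaces.linear_compose[OF Suc linear_dv] lift(2)])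
  ultimately show ?case
    by (simp only:)
qed

lemma canonical_zigzag_D: "canonical_zigzag n j x \<in> D (int j) (int n - int j)"
  using lift(1) by (cases j) (auto simp: image_subset_iff)

lemma dh_canonical_zigzag:
  assumes x: "x \<in> Zv (-1) (int n)"
    and rows: "\<And>p. -1 \<le> p \<Longrightarrow> p < int n \<Longrightarrow> row_exact p (int n - 1 - p)"
  shows "j \<le> n \<Longrightarrow> dh (canonical_zigzag n j x) = (case j of 0 \<Rightarrow> x | Suc i \<Rightarrow> dv (canonical_zigzag n i x))"
proof (induction j)
  case 0
  have "x \<in> Zh (0 - 1) (int n)"
    using x dh_column_minus1 unfolding Zv_def Zh_def by auto
  then show ?case
    using dh_lift rows[of "-1"] by simp
next
  case (Suc j)
  let ?y = "canonical_zigzag n j x"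
  have "dv (dh ?y) = 0"
  proof (cases j)
    case 0
    then show ?thesis
      using Suc x unfolding Zv_def by simp
  next
    case (Suc i)
    then show ?thesis
      using Suc.IH Suc.prems dv_dv[OF canonical_zigzag_D] by simp
  qed
  then have "dv ?y \<in> Zh (int (Suc j) - 1) (int n - int (Suc j))"
    using dv_D[OF canonical_zigzag_D[of n j x]] dh_dv_commute[OF canonical_zigzag_D]
    unfolding Zh_def by (simp add: algebra_simps)
  then show ?case
    using dh_lift rows[of "int j"] Suc.prems by (simp add: algebra_simps)
qed

lemma zigzag_canonical_zigzag:
  assumes "x \<in> Zv (-1) (int n)"
    and "\<And>p. -1 \<le> p \<Longrightarrow> p < int n \<Longrightarrow> row_exact p (int n - 1 - p)"
  shows "zigzag n (\<lambda>j. canonical_zigzag n j x)" "dh (canonical_zigzag n 0 x) = x"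
proof -
  have dh: "dh (canonical_zigzag n j x) = (case j of 0 \<Rightarrow> x | Suc i \<Rightarrow> dv (canonical_zigzag n i x))"
    if "j \<le> n" for j
    using dh_canonical_zigzag[OF assms(1) assms(2) that] by blast
  have "dh (canonical_zigzag n (Suc j) x) = dv (canonical_zigzag n j x)" if "j < n" for j
    using dh[of "Suc j"] that by (simp del: canonical_zigzag.simps)
  then show "zigzag n (\<lambda>j. canonical_zigzag n j x)"
    using canonical_zigzag_D by (simp add: zigzag_def del: canonical_zigzag.simps)
  show "dh (canonical_zigzag n 0 x) = x"
    using dh[of 0] by simp
qed

definition zigzag_map :: "nat \<Rightarrow> 'b \<Rightarrow> 'b" where
  "zigzag_map n x = dv (canonical_zigzag n n x)"

lemma linear_zigzag_map: "Vector_Spaces.linear scale scale (zigzag_map n)"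
proof -
  have "zigzag_map n = dv \<circ> canonical_zigzag n n"
    by (simp add: fun_eq_iff zigzag_map_def)
  then show ?thesis
    using Vector_Spaces.linear_compose[OF linear_canonical_zigzag linear_dv] by simp
qed

context
  assumes rows: "\<And>p q. -1 \<le> p \<Longrightarrow> 0 \<le> q \<Longrightarrow> row_exact p q"
begin

lemma zigzag_canonical_zigzag_Zv:
  "x \<in> Zv (-1) (int n) \<Longrightarrow> zigzag n (\<lambda>j. canonical_zigzag n j x) \<and> dh (canonical_zigzag n 0 x) = x"
  using zigzag_canonical_zigzag rows by simp

lemma zigzag_map_Zv:
  assumes "x \<in> Zv (-1) (int n)"
  shows "zigzag_map n x \<in> Zh (int n) (-1)"
proof -
  have c: "zigzag n (\<lambda>j. canonical_zigzag n j x)" "dh (canonical_zigzag n 0 x) = x"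
    using zigzag_canonical_zigzag_Zv[OF assms] by blast+
  have "dv (dh (canonical_zigzag n 0 x)) = 0"
    using c(2) assms unfolding Zv_def by simp
  then have "dh (dv (canonical_zigzag n n x)) = 0"
    using zigzag_cycle[OF c(1)] by simp
  then show ?thesis
    using dv_D[OF canonical_zigzag_D, of n n] unfolding zigzag_map_def Zh_def by simp
qed

lemma zigzag_map_Bv:
  assumes "x \<in> Bv (-1) (int n)"
  shows "zigzag_map n x \<in> Bh (int n) (-1)"
proof -
  have "zigzag n (\<lambda>j. canonical_zigzag n j x)" "dh (canonical_zigzag n 0 x) = x"
    using zigzag_canonical_zigzag_Zv assms Bv_subset_Zv by blast+
  then show ?thesis
    using zigzag_Bh_if_Bv[of n "\<lambda>j. canonical_zigzag n j x"] assms rows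
    unfolding zigzag_map_def by simp
qed

end

end

context double_complex
begin

text \<open>Transposition exchanges rows and columns and reverses zigzags; the remaining chase lemmas
  are transposes of earlier ones.\<close>

interpretation T: double_complex scale "\<lambda>p q. D q p" dv dh
  by (rule double_complex_transpose)

lemma transpose_simps:
  "T.Zv p q = Zh q p" "T.Bh p q = Bv q p" "T.Bv p q = Bh q p" "T.row_exact p q = col_exact q p"
  unfolding T.Zv_def Zh_def T.Bh_def Bv_def T.Bv_def Bh_def T.row_exact_def col_exact_def
    T.Zh_def Zv_def
  by (simp_all add: add.commute)

lemma transpose_zigzag: "T.zigzag n y \<longleftrightarrow> zigzag n (\<lambda>j. y (n - j))"
proof -
  have "(\<forall>j\<le>n. y j \<in> D (int n - int j) (int j)) \<longleftrightarrow> (\<forall>j\<le>n. y (n - j) \<in> D (int j) (int n - int j))"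
  proof safe
    fix j assume H: "\<forall>j\<le>n. y j \<in> D (int n - int j) (int j)" "j \<le> n"
    then show "y (n - j) \<in> D (int j) (int n - int j)"
      using H(1)[rule_format, of "n - j"] by (simp add: of_nat_diff)
  next
    fix j assume H: "\<forall>j\<le>n. y (n - j) \<in> D (int j) (int n - int j)" "j \<le> n"
    then show "y j \<in> D (int n - int j) (int j)"
      using H(1)[rule_format, of "n - j"] by (simp add: of_nat_diff)
  qed
  moreover have "(\<forall>j<n. dv (y (Suc j)) = dh (y j)) \<longleftrightarrow> (\<forall>j<n. dh (y (n - Suc j)) = dv (y (n - j)))"
  proof safe
    fix j assume H: "\<forall>j<n. dv (y (Suc j)) = dh (y j)" "j < n"
    then have "dv (y (Suc (n - Suc j))) = dh (y (n - Suc j))"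
      using H(1)[rule_format, of "n - Suc j"] by simp
    then show "dh (y (n - Suc j)) = dv (y (n - j))"
      using H(2) by (simp add: Suc_diff_Suc)
  next
    fix j assume H: "\<forall>j<n. dh (y (n - Suc j)) = dv (y (n - j))" "j < n"
    then have "dh (y (n - Suc (n - Suc j))) = dv (y (n - (n - Suc j)))"
      using H(1)[rule_format, of "n - Suc j"] by simp
    moreover have "n - Suc (n - Suc j) = j" "n - (n - Suc j) = Suc j"
      using H(2) by simp_all
    ultimately show "dv (y (Suc j)) = dh (y j)"
      by simp
  qed
  ultimately show ?thesis
    unfolding T.zigzag_def zigzag_def by simp
qed

lemma transpose_zigzag_reverse: "T.zigzag n (\<lambda>j. y (n - j)) \<longleftrightarrow> zigzag n y"
  unfolding transpose_zigzag by (rule zigzag_cong) simp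

lemma zigzag_Bv_if_Bh:
  assumes y: "zigzag n y" "dv (y n) \<in> Bh (int n) (-1)"
    and cols: "\<And>p. 0 \<le> p \<Longrightarrow> p \<le> int n + 1 \<Longrightarrow> col_exact p (int n - p)"
  shows "dh (y 0) \<in> Bv (-1) (int n)"
proof -
  have "T.zigzag n (\<lambda>j. y (n - j))"
    using y(1) transpose_zigzag_reverse by blast
  moreover have "T.row_exact p (int n - p)" if "-1 \<le> p" "p \<le> int n" for p
    using cols[of "int n - p"] that by (simp add: transpose_simps)
  ultimately show ?thesis
    using T.zigzag_Bh_if_Bv[of n "\<lambda>j. y (n - j)"] y(2) by (simp add: transpose_simps)
qed

lemma zigzag_cycle_reverse: "zigzag n y \<Longrightarrow> dh (dv (y n)) = 0 \<Longrightarrow> dv (dh (y 0)) = 0"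
  using T.zigzag_cycle[of n "\<lambda>j. y (n - j)"] transpose_zigzag_reverse by simp

lemma zigzag_ending_at:
  assumes z: "z \<in> Zh (int n) (-1)"
    and cols: "\<And>p. 0 \<le> p \<Longrightarrow> p \<le> int n \<Longrightarrow> col_exact p (int n - 1 - p)"
  obtains y where "zigzag n y" "dv (y n) = z"
proof -
  have "T.row_exact p (int n - 1 - p)" if "-1 \<le> p" "p < int n" for p
    using cols[of "int n - 1 - p"] that by (simp add: transpose_simps)
  moreover have "z \<in> T.Zv (-1) (int n)"
    using z by (simp add: transpose_simps)
  ultimately have "T.zigzag n (\<lambda>j. T.canonical_zigzag n j z)" "dv (T.canonical_zigzag n 0 z) = z"
    using T.zigzag_canonical_zigzag by blast+
  then show ?thesis
    using that[of "\<lambda>j. T.canonical_zigzag n (n - j) z"] transpose_zigzag by simp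
qed

lemma zigzag_map_inj_modulo_boundaries:
  assumes rows: "\<And>p q. -1 \<le> p \<Longrightarrow> 0 \<le> q \<Longrightarrow> row_exact p q"
    and cols: "\<And>p. 0 \<le> p \<Longrightarrow> p \<le> int n + 1 \<Longrightarrow> col_exact p (int n - p)"
    and x: "x \<in> Zv (-1) (int n)" "zigzag_map n x \<in> Bh (int n) (-1)"
  shows "x \<in> Bv (-1) (int n)"
proof -
  have c: "zigzag n (\<lambda>j. canonical_zigzag n j x)" "dh (canonical_zigzag n 0 x) = x"
    using zigzag_canonical_zigzag_Zv[OF rows x(1)] by blast+
  show ?thesis
    using zigzag_Bv_if_Bh[OF c(1) _ cols] x(2) c(2) unfolding zigzag_map_def by simp
qed

lemma zigzag_map_surj_modulo_boundaries:
  assumes rows: "\<And>p q. -1 \<le> p \<Longrightarrow> 0 \<le> q \<Longrightarrow> row_exact p q"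
    and cols: "\<And>p. 0 \<le> p \<Longrightarrow> p \<le> int n \<Longrightarrow> col_exact p (int n - 1 - p)"
    and z: "z \<in> Zh (int n) (-1)"
  shows "\<exists>x\<in>Zv (-1) (int n). z - zigzag_map n x \<in> Bh (int n) (-1)"
proof -
  obtain y where y: "zigzag n y" "dv (y n) = z"
    using zigzag_ending_at[OF z cols] by blast
  define x where "x = dh (y 0)"
  have "y 0 \<in> D 0 (int n)"
    using y(1) unfolding zigzag_def by force
  moreover have "dv (dh (y 0)) = 0"
    using zigzag_cycle_reverse[OF y(1)] y(2) z unfolding Zh_def by simp
  ultimately have x: "x \<in> Zv (-1) (int n)"
    using dh_D[of "y 0" 0] unfolding x_def Zv_def by simp
  then have c: "zigzag n (\<lambda>j. canonical_zigzag n j x)" "dh (canonical_zigzag n 0 x) = x"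
    using zigzag_canonical_zigzag_Zv[OF rows] by blast+
  have "dh (canonical_zigzag n 0 x - y 0) \<in> Bv (-1) (int n)"
    using c(2) subspace_0[OF subspace_Bv] unfolding x_def by (simp add: dh.diff)
  then have "dv (canonical_zigzag n n x - y n) \<in> Bh (int n) (-1)"
    using zigzag_Bh_if_Bv[OF zigzag_diff[OF c(1) y(1)]] rows by simp
  then have "- (z - zigzag_map n x) \<in> Bh (int n) (-1)"
    using y(2) unfolding zigzag_map_def by (simp add: dv.diff)
  then show ?thesis
    using subspace_neg[OF subspace_Bh] x by fastforce
qed

theorem zigzag_quotient_dims:
  assumes rows: "\<And>p q. -1 \<le> p \<Longrightarrow> 0 \<le> q \<Longrightarrow> row_exact p q"
    and cols: "\<And>p. 0 \<le> p \<Longrightarrow> p \<le> int k + 1 \<Longrightarrow> col_exact p (int k - p)"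
  shows "dim (Zv (-1) (int k)) + dim (Bh (int k) (-1)) \<le> dim (Zh (int k) (-1)) + dim (Bv (-1) (int k))"
    and "dim (Zh (int k + 1) (-1)) + dim (Bv (-1) (int k + 1))
      \<le> dim (Zv (-1) (int k + 1)) + dim (Bh (int k + 1) (-1))"
proof -
  note quotient_rule = subspace_Zv finite_dimensional_Zv subspace_Zh finite_dimensional_Zh
    subspace_Bh Bh_subset_Zh Bv_subset_Zv
  have images: "zigzag_map n ` Bv (-1) (int n) \<subseteq> Bh (int n) (-1)"
    "zigzag_map n ` Zv (-1) (int n) \<subseteq> Zh (int n) (-1)" for n
    using zigzag_map_Bv[OF rows] zigzag_map_Zv[OF rows] by blast+
  show "dim (Zv (-1) (int k)) + dim (Bh (int k) (-1)) \<le> dim (Zh (int k) (-1)) + dim (Bv (-1) (int k))"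
    by (rule quotient_dim_le_if_inj[OF linear_zigzag_map quotient_rule images
          zigzag_map_inj_modulo_boundaries[OF rows cols]])
  have "col_exact p (int (Suc k) - 1 - p)" if "0 \<le> p" "p \<le> int (Suc k)" for p
    using cols that by simp
  then have "dim (Zh (int (Suc k)) (-1)) + dim (Bv (-1) (int (Suc k)))
      \<le> dim (Zv (-1) (int (Suc k))) + dim (Bh (int (Suc k)) (-1))"
    by (intro quotient_dim_le_if_surj[OF linear_zigzag_map quotient_rule images]
        zigzag_map_surj_modulo_boundaries[OF rows])
  then show "dim (Zh (int k + 1) (-1)) + dim (Bv (-1) (int k + 1))
      \<le> dim (Zv (-1) (int k + 1)) + dim (Bh (int k + 1) (-1))"
    by (simp add: add.commute)
qed

end

section \<open>Oriented simplicial chains\<close>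

definition fun_scale :: "'k::field \<Rightarrow> ('i \<Rightarrow> 'k) \<Rightarrow> ('i \<Rightarrow> 'k)" where
  "fun_scale a c = (\<lambda>x. a * c x)"

lemma vector_space_fun_scale: "vector_space (fun_scale :: 'k::field \<Rightarrow> ('i \<Rightarrow> 'k) \<Rightarrow> ('i \<Rightarrow> 'k))"
  unfolding vector_space_def fun_scale_def by (auto simp: fun_eq_iff algebra_simps)

lemma chain_scale_eq_fun_scale: "chain_scale = fun_scale"
  by (simp add: fun_eq_iff chain_scale_def fun_scale_def)

lemma linear_fun_scaleI:
  assumes "\<And>x y. f (x + y) = f x + f y" "\<And>a x. f (fun_scale a x) = fun_scale a (f x)"
  shows "Vector_Spaces.linear (fun_scale :: 'k::field \<Rightarrow> ('i \<Rightarrow> 'k) \<Rightarrow> ('i \<Rightarrow> 'k))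
     (fun_scale :: 'k \<Rightarrow> ('j \<Rightarrow> 'k) \<Rightarrow> ('j \<Rightarrow> 'k)) f"
  using assms vector_space_fun_scale[where 'i='i] vector_space_fun_scale[where 'i='j]
  by (auto simp: Vector_Spaces.linear_iff)

lemma subspace_support:
  "module.subspace (fun_scale :: 'k::field \<Rightarrow> ('i \<Rightarrow> 'k) \<Rightarrow> ('i \<Rightarrow> 'k)) {c. \<forall>x. c x \<noteq> 0 \<longrightarrow> P x}"
proof -
  interpret vector_space "fun_scale :: 'k \<Rightarrow> ('i \<Rightarrow> 'k) \<Rightarrow> ('i \<Rightarrow> 'k)"
    by (rule vector_space_fun_scale)
  show ?thesis
    unfolding subspace_def by (auto simp: fun_scale_def) (metis add.right_neutral)
qed

lemma finite_dimensional_support: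
  assumes "finite P"
  shows "finite_dimensional (fun_scale :: 'k::field \<Rightarrow> ('i \<Rightarrow> 'k) \<Rightarrow> ('i \<Rightarrow> 'k))
    {c. \<forall>x. c x \<noteq> 0 \<longrightarrow> x \<in> P}"
proof -
  interpret vector_space "fun_scale :: 'k \<Rightarrow> ('i \<Rightarrow> 'k) \<Rightarrow> ('i \<Rightarrow> 'k)"
    by (rule vector_space_fun_scale)
  define e :: "'i \<Rightarrow> 'i \<Rightarrow> 'k" where "e x = (\<lambda>y. if y = x then 1 else 0)" for x
  have "c \<in> span (e ` P)" if c: "\<forall>x. c x \<noteq> 0 \<longrightarrow> x \<in> P" for c
  proof -
    have "c = (\<Sum>x\<in>P. fun_scale (c x) (e x))"
    proof
      fix y
      have "(\<Sum>x\<in>P. fun_scale (c x) (e x)) y = (\<Sum>x\<in>P. if x = y then c y else 0)"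
        by (induction P rule: infinite_finite_induct) (auto simp: fun_scale_def e_def)
      also have "\<dots> = c y"
        using assms c by (auto simp: sum.delta)
      finally show "c y = (\<Sum>x\<in>P. fun_scale (c x) (e x)) y"
        by simp
    qed
    also have "\<dots> \<in> span (e ` P)"
      by (intro span_sum span_scale span_base) auto
    finally show ?thesis .
  qed
  then show ?thesis
    unfolding finite_dimensional_def using assms by blast
qed

definition insertion_sign :: "'v::linorder \<Rightarrow> 'v set \<Rightarrow> 'k::field" where
  "insertion_sign v t = (-1) ^ card {u \<in> t. u < v}"

definition boundary_on :: "'v::linorder set \<Rightarrow> ('v set \<Rightarrow> 'k::field) \<Rightarrow> ('v set \<Rightarrow> 'k)" where
  "boundary_on V c = (\<lambda>t. \<Sum>v \<in> V - t. insertion_sign v t * c (insert v t))"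

lemma boundary_eq_boundary_on: "boundary K c = boundary_on (\<Union>K) c"
  unfolding boundary_def boundary_on_def insertion_sign_def by simp

lemma insertion_sign_square: "insertion_sign v t * insertion_sign v t = (1::'k::field)"
  unfolding insertion_sign_def by (simp flip: power_add mult_2)

lemma insertion_sign_insert:
  assumes "finite t" "u \<notin> t" "u \<noteq> v"
  shows "insertion_sign v (insert u t)
    = (if u < v then - insertion_sign v t else (insertion_sign v t :: 'k::field))"
proof (cases "u < v")
  case True
  then have "{w \<in> insert u t. w < v} = insert u {w \<in> t. w < v}"
    by auto
  then show ?thesis
    using True assms unfolding insertion_sign_def by simp
next
  case False
  then have "{w \<in> insert u t. w < v} = {w \<in> t. w < v}"
    by auto
  then show ?thesis
    using False unfolding insertion_sign_def by simp
qed

lemma insertion_sign_swap: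
  assumes "finite t" "v \<notin> t" "w \<notin> t" "v \<noteq> w"
  shows "insertion_sign w t * insertion_sign v (insert w t)
    = - (insertion_sign v t * insertion_sign w (insert v t) :: 'k::field)"
  using assms insertion_sign_insert[where 'k='k, of t w v] insertion_sign_insert[where 'k='k, of t v w]
  by (cases "v < w") (auto simp: algebra_simps)

lemma boundary_on_boundary_on_finite:
  assumes V: "finite V" and t: "finite t"
  shows "boundary_on V (boundary_on V c) t = (0::'k::field)"
proof -
  define f where "f = (\<lambda>(v, w).
    insertion_sign v t * insertion_sign w (insert v t) * (c (insert w (insert v t)) :: 'k))"
  define P where "P = Sigma (V - t) (\<lambda>v. V - insert v t)"
  define P' where "P' = {p\<in>P. fst p < snd p}"
  have "boundary_on V (boundary_on V c) t = sum f P"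
    unfolding boundary_on_def f_def P_def using V by (simp add: sum_distrib_left mult.assoc sum.Sigma)
  also have "P = P' \<union> prod.swap ` P'"
    unfolding P_def P'_def by (auto simp: neq_iff image_iff)
  also have "sum f \<dots> = sum f P' + sum (f \<circ> prod.swap) P'"
    using V by (subst sum.union_disjoint) (auto simp: P_def P'_def sum.reindex)
  also have "sum (f \<circ> prod.swap) P' = sum (\<lambda>p. - f p) P'"
  proof (rule sum.cong[OF refl])
    fix p assume "p \<in> P'"
    then obtain v w where p: "p = (v, w)" "v \<in> V - t" "w \<in> V - t" "v < w"
      unfolding P_def P'_def by auto
    have "insert v (insert w t) = insert w (insert v t)"
      by auto
    then show "(f \<circ> prod.swap) p = - f p"
      using insertion_sign_swap[where 'k='k, of t v w] p t unfolding f_def by simp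
  qed
  finally show ?thesis
    by (simp add: sum_negf)
qed

lemma boundary_on_boundary_on:
  assumes "finite V" "\<And>s. infinite s \<Longrightarrow> c s = 0"
  shows "boundary_on V (boundary_on V c) = (\<lambda>_. (0::'k::field))"
proof
  fix t
  show "boundary_on V (boundary_on V c) t = 0"
    using boundary_on_boundary_on_finite[OF assms(1)] assms(2)
    by (cases "finite t") (auto simp: boundary_on_def)
qed

lemma boundary_on_mono_vertices:
  assumes "V \<subseteq> V'" "finite V'" "\<And>s. c s \<noteq> 0 \<Longrightarrow> s \<subseteq> V"
  shows "boundary_on V' c = (boundary_on V c :: 'v::linorder set \<Rightarrow> 'k::field)"
proof
  fix t
  have "\<forall>v\<in>V' - t - (V - t). insertion_sign v t * c (insert v t) = 0"
    using assms(3) by auto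
  then show "boundary_on V' c t = boundary_on V c t"
    unfolding boundary_on_def by (intro sum.mono_neutral_right) (use assms in auto)
qed

lemma boundary_on_nonzero:
  assumes "boundary_on V c t \<noteq> 0"
  shows "\<exists>v\<in>V - t. c (insert v t) \<noteq> 0"
proof (rule ccontr)
  assume "\<not> ?thesis"
  then have "boundary_on V c t = 0"
    unfolding boundary_on_def by (intro sum.neutral) auto
  then show False
    using assms by simp
qed

lemma boundary_on_zero [simp]: "boundary_on V (\<lambda>_. 0) = (\<lambda>_. (0::'k::field))"
  by (simp add: boundary_on_def)

lemma linear_boundary_on:
  "Vector_Spaces.linear fun_scale fun_scale (boundary_on V :: ('v::linorder set \<Rightarrow> 'k::field) \<Rightarrow> _)"
  by (rule linear_fun_scaleI)
    (auto simp: boundary_on_def fun_eq_iff fun_scale_def algebra_simps sum.distrib sum_distrib_left)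

definition cone :: "'v::linorder \<Rightarrow> ('v set \<Rightarrow> 'k::field) \<Rightarrow> ('v set \<Rightarrow> 'k)" where
  "cone a f = (\<lambda>s. if a \<in> s then insertion_sign a (s - {a}) * f (s - {a}) else 0)"

lemma cone_zero [simp]: "cone a (\<lambda>_. 0) = (\<lambda>_. 0)"
  by (simp add: cone_def fun_eq_iff)

lemma boundary_on_cone_apex_notin:
  assumes "finite V" "a \<in> V" "a \<notin> t"
  shows "boundary_on V (cone a f) t = (f t :: 'k::field)"
proof -
  have "boundary_on V (cone a f) t
      = (\<Sum>v\<in>V - t. if v = a then insertion_sign a t * (insertion_sign a t * f t) else 0)"
    unfolding boundary_on_def cone_def by (rule sum.cong) (use assms(3) in auto)
  also have "\<dots> = f t"
    using assms insertion_sign_square[where 'k='k, of a t] by (simp add: mult.assoc[symmetric])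
  finally show ?thesis .
qed

lemma boundary_on_cone_apex_in:
  assumes V: "finite V" "a \<in> V" and t: "finite t" "a \<in> t"
  shows "boundary_on V (cone a f) t + cone a (boundary_on V f) t = (f t :: 'k::field)"
proof -
  define t' where "t' = t - {a}"
  have t': "t = insert a t'" "a \<notin> t'" "finite t'"
    using t unfolding t'_def by auto
  let ?s = "insertion_sign :: _ \<Rightarrow> _ \<Rightarrow> 'k"
  let ?S = "\<Sum>v\<in>V - t. ?s v t' * f (insert v t')"
  have sign: "?s v t * ?s a (insert v t') = - (?s a t' * ?s v t')" if "v \<in> V - t" for v
    using that t' insertion_sign_insert[where 'k='k, of t' a v] insertion_sign_insert[where 'k='k, of t' v a]
    by (cases "a < v") (auto simp: mult.commute)
  have "boundary_on V (cone a f) t = (\<Sum>v\<in>V - t. - (?s a t' * (?s v t' * f (insert v t'))))"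
    unfolding boundary_on_def cone_def
  proof (rule sum.cong[OF refl])
    fix v assume v: "v \<in> V - t"
    then have "insert v t - {a} = insert v t'"
      using t' by auto
    then show "?s v t * (if a \<in> insert v t then ?s a (insert v t - {a}) * f (insert v t - {a}) else 0)
        = - (?s a t' * (?s v t' * f (insert v t')))"
      using sign[OF v] t(2) by (simp add: mult.assoc[symmetric])
  qed
  also have "\<dots> = - (?s a t' * ?S)"
    by (simp add: sum_negf sum_distrib_left)
  finally have "boundary_on V (cone a f) t = - (?s a t' * ?S)" .
  moreover have "cone a (boundary_on V f) t = ?s a t' * boundary_on V f t'"
    unfolding cone_def t'_def using t(2) by simp
  moreover have "boundary_on V f t' = ?s a t' * f t + ?S"
  proof -
    have "V - t' = insert a (V - t)" "a \<notin> V - t"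
      using V t' by auto
    then show ?thesis
      unfolding boundary_on_def using V(1) t'(1)[symmetric] by simp
  qed
  ultimately show ?thesis
    using insertion_sign_square[where 'k='k, of a t'] by (simp add: algebra_simps)
qed

lemma boundary_on_cone_cycle:
  assumes V: "finite V" "a \<in> V" and f: "\<And>s. infinite s \<Longrightarrow> f s = 0" "boundary_on V f = (\<lambda>_. 0)"
  shows "boundary_on V (cone a f) = (f :: 'v::linorder set \<Rightarrow> 'k::field)"
proof
  fix t
  show "boundary_on V (cone a f) t = f t"
  proof (cases "finite t")
    case False
    then have "infinite (insert v t - {a})" for v
      by simp
    then have "cone a f (insert v t) = 0" for v
      using f(1) unfolding cone_def by (simp del: insert_Diff_if)
    then show ?thesis
      using f(1)[OF False] unfolding boundary_on_def by simp
  next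
    case True
    then show ?thesis
      using boundary_on_cone_apex_notin[OF V] boundary_on_cone_apex_in[OF V True, of f] f(2)
      by (cases "a \<in> t") (simp_all add: cone_def)
  qed
qed

lemma subspace_chains: "module.subspace fun_scale (chains K q)"
  unfolding chains_def by (rule subspace_support)

lemma chains_infinite:
  "simplicial_complex K \<Longrightarrow> c \<in> chains K q \<Longrightarrow> infinite s \<Longrightarrow> c s = 0"
  unfolding simplicial_complex_def chains_def by blast

lemma boundary_on_chains:
  assumes K: "simplicial_complex K" and c: "c \<in> chains K (q + 1)"
  shows "boundary_on V c \<in> chains K q"
  unfolding chains_def
proof (intro CollectI allI impI)
  fix t assume "boundary_on V c t \<noteq> 0"
  then obtain v where v: "v \<in> V - t" "c (insert v t) \<noteq> 0"
    using boundary_on_nonzero by blast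
  then have "insert v t \<in> K" "int (card (insert v t)) = q + 2"
    using c unfolding chains_def by auto
  moreover have "finite t"
    using K calculation(1) unfolding simplicial_complex_def by blast
  ultimately show "t \<in> K \<and> int (card t) = q + 1"
    using K v unfolding simplicial_complex_def by auto
qed

lemma bounding_subset_cycles:
  assumes K: "simplicial_complex K"
  shows "bounding K q \<subseteq> cycles K q"
proof
  fix x assume "x \<in> bounding K q"
  then obtain c where c: "c \<in> chains K (q + 1)" "x = boundary K c"
    unfolding bounding_def by blast
  have "finite (\<Union>K)"
    using K unfolding simplicial_complex_def by blast
  then have "boundary K x = (\<lambda>_. 0)"
    unfolding c(2) boundary_eq_boundary_on
    by (rule boundary_on_boundary_on) (use chains_infinite[OF K c(1)] in blast)
  then show "x \<in> cycles K q"
    using boundary_on_chains[OF K c(1)] c(2) unfolding cycles_def boundary_eq_boundary_on by simp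
qed

lemma cycles_subset_bounding_if_reduced_betti_eq_0:
  assumes K: "simplicial_complex (K :: 'v::linorder set set)"
    and betti: "reduced_betti TYPE('k::field) K q = 0"
  shows "cycles K q \<subseteq> (bounding K q :: ('v set \<Rightarrow> 'k) set)"
proof -
  interpret vector_space "fun_scale :: 'k \<Rightarrow> ('v set \<Rightarrow> 'k) \<Rightarrow> ('v set \<Rightarrow> 'k)"
    by (rule vector_space_fun_scale)
  interpret boundary: Vector_Spaces.linear fun_scale fun_scale "boundary K :: ('v set \<Rightarrow> 'k) \<Rightarrow> _"
    unfolding boundary_eq_boundary_on[abs_def] by (rule linear_boundary_on)
  have "cycles K q \<subseteq> {c. \<forall>s. c s \<noteq> 0 \<longrightarrow> s \<in> K}"
    unfolding cycles_def chains_def by blast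
  then have "finite_dimensional fun_scale (cycles K q :: ('v set \<Rightarrow> 'k) set)"
    using finite_dimensional_subset[OF finite_dimensional_support] K
    unfolding simplicial_complex_def by blast
  moreover have "subspace (bounding K q :: ('v set \<Rightarrow> 'k) set)"
    unfolding bounding_def by (rule boundary.subspace_image[OF subspace_chains])
  moreover have "dim (cycles K q :: ('v set \<Rightarrow> 'k) set) \<le> dim (bounding K q :: ('v set \<Rightarrow> 'k) set)"
    using betti unfolding reduced_betti_def chain_scale_eq_fun_scale by simp
  ultimately show ?thesis
    using subset_subspace_if_dim_le bounding_subset_cycles[OF K] by blast
qed

lemma boundary_on_vertex:
  assumes "finite V" "v \<in> V"
  shows "boundary_on V (\<lambda>s. if s = {v} then a else 0) = (\<lambda>t. if t = {} then a else (0::'k::field))"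
proof
  fix t
  show "boundary_on V (\<lambda>s. if s = {v} then a else 0) t = (if t = {} then a else 0)"
  proof (cases "t = {}")
    case True
    then show ?thesis
      unfolding boundary_on_def insertion_sign_def using assms by simp
  next
    case False
    have "insertion_sign u t * (if insert u t = {v} then a else 0) = (0::'k)" if "u \<in> V - t" for u
      using False that by auto
    then have "boundary_on V (\<lambda>s. if s = {v} then a else 0) t = 0"
      unfolding boundary_on_def by (intro sum.neutral ballI)
    then show ?thesis
      using False by simp
  qed
qed

lemma cycles_minus1_subset_bounding:
  assumes K: "simplicial_complex K" and v: "{v} \<in> K"
  shows "cycles K (-1) \<subseteq> (bounding K (-1) :: ('v::linorder set \<Rightarrow> 'k::field) set)"
proof
  fix c :: "'v set \<Rightarrow> 'k" assume c: "c \<in> cycles K (-1)"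
  have c0: "c s = 0" if "s \<noteq> {}" for s
  proof (rule ccontr)
    assume "c s \<noteq> 0"
    then have "s \<in> K" "card s = 0"
      using c unfolding cycles_def chains_def by auto
    moreover have "finite s"
      using K \<open>s \<in> K\<close> unfolding simplicial_complex_def by blast
    ultimately show False
      using that by simp
  qed
  have "finite (\<Union>K)"
    using K unfolding simplicial_complex_def by blast
  moreover have "v \<in> \<Union>K"
    using v by blast
  ultimately have "boundary K (\<lambda>s. if s = {v} then c {} else 0) = (\<lambda>t. if t = {} then c {} else 0)"
    unfolding boundary_eq_boundary_on by (rule boundary_on_vertex)
  also have "\<dots> = c"
    using c0 by fastforce
  finally have "boundary K (\<lambda>s. if s = {v} then c {} else 0) = c" .
  moreover have "(\<lambda>s. if s = {v} then c {} else 0) \<in> chains K (-1 + 1)"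
    using v unfolding chains_def by simp
  ultimately show "c \<in> bounding K (-1)"
    unfolding bounding_def by (metis image_eqI)
qed

section \<open>The double complex of a cover\<close>

text \<open>\<open>inter_cover X A \<sigma>\<close> is the paper's \<open>A\<^sub>\<sigma>\<close>; intersecting with \<open>X\<close> makes the empty
  index set give \<open>X\<close> instead of the universal set.\<close>

definition inter_cover :: "'v set set \<Rightarrow> (nat \<Rightarrow> 'v set set) \<Rightarrow> nat set \<Rightarrow> 'v set set" where
  "inter_cover X A \<sigma> = X \<inter> inter_family A \<sigma>"

definition cover_chains :: "'v set set \<Rightarrow> (nat \<Rightarrow> 'v set set) \<Rightarrow> nat \<Rightarrow> int \<Rightarrow> int
    \<Rightarrow> (nat set \<times> 'v set \<Rightarrow> 'k::field) set" where
  "cover_chains X A m p q = {c. \<forall>\<sigma> s. c (\<sigma>, s) \<noteq> 0 \<longrightarrow>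
     \<sigma> \<in> nerve m A \<and> s \<in> inter_cover X A \<sigma> \<and> int (card \<sigma>) = p + 1 \<and> int (card s) = q + 1}"

definition nerve_differential ::
    "nat \<Rightarrow> (nat set \<times> 'v::linorder set \<Rightarrow> 'k::field) \<Rightarrow> (nat set \<times> 'v set \<Rightarrow> 'k)" where
  "nerve_differential m c = (\<lambda>(\<tau>, s). boundary_on {0..<m} (\<lambda>\<sigma>. c (\<sigma>, s)) \<tau>)"

definition space_differential ::
    "'v::linorder set set \<Rightarrow> (nat set \<times> 'v set \<Rightarrow> 'k::field) \<Rightarrow> (nat set \<times> 'v set \<Rightarrow> 'k)" where
  "space_differential X c = (\<lambda>(\<sigma>, t). boundary_on (\<Union>X) (\<lambda>s. c (\<sigma>, s)) t)"

definition column_embedding :: "('v set \<Rightarrow> 'k::field) \<Rightarrow> (nat set \<times> 'v set \<Rightarrow> 'k)" where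
  "column_embedding c = (\<lambda>(\<sigma>, s). if \<sigma> = {} then c s else 0)"

definition row_embedding :: "(nat set \<Rightarrow> 'k::field) \<Rightarrow> (nat set \<times> 'v set \<Rightarrow> 'k)" where
  "row_embedding c = (\<lambda>(\<sigma>, s). if s = {} then c \<sigma> else 0)"

lemma linear_column_embedding:
  "Vector_Spaces.linear fun_scale fun_scale (column_embedding :: ('v set \<Rightarrow> 'k::field) \<Rightarrow> _)"
  by (rule linear_fun_scaleI) (auto simp: column_embedding_def fun_scale_def fun_eq_iff)

lemma linear_row_embedding:
  "Vector_Spaces.linear fun_scale fun_scale (row_embedding :: _ \<Rightarrow> (nat set \<times> 'v set \<Rightarrow> 'k::field))"
  by (rule linear_fun_scaleI) (auto simp: row_embedding_def fun_scale_def fun_eq_iff)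

lemma inj_column_embedding: "inj (column_embedding :: ('v set \<Rightarrow> 'k::field) \<Rightarrow> _)"
proof (rule injI)
  fix c d :: "'v set \<Rightarrow> 'k" assume "column_embedding c = column_embedding d"
  then have "column_embedding c ({}, s) = column_embedding d ({}, s)" for s
    by simp
  then show "c = d"
    by (simp add: column_embedding_def fun_eq_iff)
qed

lemma inj_row_embedding: "inj (row_embedding :: _ \<Rightarrow> (nat set \<times> 'v set \<Rightarrow> 'k::field))"
proof (rule injI)
  fix c d :: "nat set \<Rightarrow> 'k"
  assume "(row_embedding c :: nat set \<times> 'v set \<Rightarrow> 'k) = row_embedding d"
  then have "(row_embedding c :: nat set \<times> 'v set \<Rightarrow> 'k) (\<sigma>, {})
      = (row_embedding d :: nat set \<times> 'v set \<Rightarrow> 'k) (\<sigma>, {})" for \<sigma>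
    by simp
  then show "c = d"
    by (simp add: row_embedding_def fun_eq_iff)
qed

lemma image_kernel_eq:
  assumes "inj e" "e 0 = 0" "\<And>c. c \<in> C \<Longrightarrow> d (e c) = e (b c)"
  shows "{x \<in> e ` C. d x = 0} = e ` {c \<in> C. b c = 0}"
proof -
  have "e c = 0 \<longleftrightarrow> c = 0" for c
    using assms(1,2) by (metis injD)
  then show ?thesis
    using assms(3) by auto
qed

locale simplicial_cover =
  fixes X :: "'v::linorder set set" and A :: "nat \<Rightarrow> 'v set set" and m :: nat
  assumes complex: "simplicial_complex X"
    and subcomplexes: "\<And>i. i < m \<Longrightarrow> subcomplex (A i) X"
    and covers: "(\<Union>i<m. A i) = X"
begin

lemma finite_X: "finite X" and empty_face: "{} \<in> X" and finite_face: "s \<in> X \<Longrightarrow> finite s"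
  and face_subset: "s \<in> X \<Longrightarrow> t \<subseteq> s \<Longrightarrow> t \<in> X"
  using complex unfolding simplicial_complex_def by blast+

lemma finite_vertices: "finite (\<Union>X)"
  using finite_X finite_face by blast

lemma nerve_subset: "\<sigma> \<in> nerve m A \<Longrightarrow> \<sigma> \<subseteq> {0..<m}"
  unfolding nerve_def by blast

lemma finite_nerve_face: "\<sigma> \<in> nerve m A \<Longrightarrow> finite \<sigma>"
  using nerve_subset finite_subset by blast

lemma inter_cover_empty [simp]: "inter_cover X A {} = X"
  by (simp add: inter_cover_def inter_family_def)

lemma inter_cover_eq_inter_family:
  assumes "\<sigma> \<noteq> {}" "\<sigma> \<subseteq> {0..<m}"
  shows "inter_cover X A \<sigma> = inter_family A \<sigma>"
  using assms subcomplexes unfolding inter_cover_def inter_family_def subcomplex_def by fastforce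

lemma inter_cover_antimono: "\<tau> \<subseteq> \<sigma> \<Longrightarrow> inter_cover X A \<sigma> \<subseteq> inter_cover X A \<tau>"
  unfolding inter_cover_def inter_family_def by blast

lemma inter_cover_insert: "inter_cover X A (insert i \<sigma>) = inter_cover X A \<sigma> \<inter> A i"
  unfolding inter_cover_def inter_family_def by auto

lemma simplicial_complex_inter_cover:
  assumes "\<sigma> \<subseteq> {0..<m}"
  shows "simplicial_complex (inter_cover X A \<sigma>)"
proof -
  have A: "{} \<in> A i" "\<forall>s\<in>A i. \<forall>t. t \<subseteq> s \<longrightarrow> t \<in> A i" if "i \<in> \<sigma>" for i
    using subcomplexes[of i] assms that unfolding subcomplex_def simplicial_complex_def by auto
  show ?thesis
    unfolding simplicial_complex_def
  proof (intro conjI ballI allI impI)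
    show "finite (inter_cover X A \<sigma>)" "{} \<in> inter_cover X A \<sigma>"
      using finite_X empty_face A(1) unfolding inter_cover_def inter_family_def by auto
    show "finite s" if "s \<in> inter_cover X A \<sigma>" for s
      using that finite_face by (simp add: inter_cover_def)
    show "t \<in> inter_cover X A \<sigma>" if s: "s \<in> inter_cover X A \<sigma>" and "t \<subseteq> s" for s t
    proof -
      have "t \<in> A i" if "i \<in> \<sigma>" for i
        using A(2)[OF that] s \<open>t \<subseteq> s\<close> that unfolding inter_cover_def inter_family_def by blast
      moreover have "t \<in> X"
        using face_subset s \<open>t \<subseteq> s\<close> unfolding inter_cover_def by blast
      ultimately show ?thesis
        unfolding inter_cover_def inter_family_def by blast
    qed
  qed
qed

lemma nerve_iff:
  "\<sigma> \<in> nerve m A \<longleftrightarrow> \<sigma> \<subseteq> {0..<m} \<and> (\<sigma> = {} \<or> (\<exists>s\<in>inter_cover X A \<sigma>. s \<noteq> {}))"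
proof (cases "\<sigma> \<noteq> {} \<and> \<sigma> \<subseteq> {0..<m}")
  case True
  then show ?thesis
    unfolding nerve_def using inter_cover_eq_inter_family[of \<sigma>] by simp
next
  case False
  then show ?thesis
    unfolding nerve_def by (cases "\<sigma> = {}") simp_all
qed

lemma nerve_face_subset:
  assumes "\<sigma> \<in> nerve m A" "\<tau> \<subseteq> \<sigma>"
  shows "\<tau> \<in> nerve m A"
proof (cases "\<tau> = {}")
  case False
  then obtain s where "s \<in> inter_cover X A \<sigma>" "s \<noteq> {}"
    using assms unfolding nerve_iff by blast
  moreover have "\<tau> \<subseteq> {0..<m}"
    using assms nerve_subset by blast
  ultimately show ?thesis
    unfolding nerve_iff using inter_cover_antimono[OF assms(2)] by blast
qed (simp add: nerve_def)

lemma simplicial_complex_nerve: "simplicial_complex (nerve m A)"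
proof -
  have "finite (nerve m A)"
    by (rule finite_subset[of _ "Pow {0..<m}"]) (auto simp: nerve_def)
  moreover have "{} \<in> nerve m A"
    by (simp add: nerve_def)
  ultimately show ?thesis
    unfolding simplicial_complex_def using finite_nerve_face nerve_face_subset by blast
qed

lemma cover_chains_iff:
  "c \<in> cover_chains X A m p q \<longleftrightarrow> (\<forall>\<sigma> s. c (\<sigma>, s) \<noteq> 0 \<longrightarrow>
     \<sigma> \<in> nerve m A \<and> s \<in> inter_cover X A \<sigma> \<and> int (card \<sigma>) = p + 1 \<and> int (card s) = q + 1)"
  unfolding cover_chains_def by simp

lemma cover_chains_infinite:
  assumes "c \<in> cover_chains X A m p q"
  shows "infinite \<sigma> \<Longrightarrow> c (\<sigma>, s) = 0" and "infinite s \<Longrightarrow> c (\<sigma>, s) = 0"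
  using assms finite_nerve_face finite_face unfolding cover_chains_iff inter_cover_def by blast+

lemma subspace_cover_chains: "module.subspace fun_scale (cover_chains X A m p q)"
proof -
  have eq: "cover_chains X A m p q = {c. \<forall>z. c z \<noteq> 0 \<longrightarrow> (case z of (\<sigma>, s) \<Rightarrow>
      \<sigma> \<in> nerve m A \<and> s \<in> inter_cover X A \<sigma> \<and> int (card \<sigma>) = p + 1 \<and> int (card s) = q + 1)}"
    unfolding cover_chains_def by auto
  show ?thesis
    unfolding eq by (rule subspace_support)
qed

lemma finite_dimensional_cover_chains:
  "finite_dimensional fun_scale (cover_chains X A m p q :: (nat set \<times> 'v set \<Rightarrow> 'k::field) set)"
proof -
  interpret vector_space "fun_scale :: 'k \<Rightarrow> (nat set \<times> 'v set \<Rightarrow> 'k) \<Rightarrow> _"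
    by (rule vector_space_fun_scale)
  have "finite (nerve m A \<times> X)"
    using simplicial_complex_nerve finite_X unfolding simplicial_complex_def by blast
  moreover have "cover_chains X A m p q \<subseteq> {c :: nat set \<times> 'v set \<Rightarrow> 'k. \<forall>z. c z \<noteq> 0 \<longrightarrow> z \<in> nerve m A \<times> X}"
    unfolding cover_chains_def inter_cover_def by auto
  ultimately show ?thesis
    by (rule finite_dimensional_subset[OF finite_dimensional_support])
qed

lemma cover_chains_vanish: "p < -1 \<or> q < -1 \<Longrightarrow> cover_chains X A m p q = {0}"
  unfolding cover_chains_def by (auto simp: fun_eq_iff)

lemma linear_nerve_differential:
  "Vector_Spaces.linear fun_scale fun_scale (nerve_differential m :: (nat set \<times> 'v set \<Rightarrow> 'k::field) \<Rightarrow> _)"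
  by (rule linear_fun_scaleI)
    (auto simp: nerve_differential_def boundary_on_def fun_eq_iff fun_scale_def algebra_simps
      sum.distrib sum_distrib_left)

lemma linear_space_differential:
  "Vector_Spaces.linear fun_scale fun_scale (space_differential X :: (nat set \<times> 'v set \<Rightarrow> 'k::field) \<Rightarrow> _)"
  by (rule linear_fun_scaleI)
    (auto simp: space_differential_def boundary_on_def fun_eq_iff fun_scale_def algebra_simps
      sum.distrib sum_distrib_left)

lemma nerve_differential_cover_chains:
  assumes x: "x \<in> cover_chains X A m p q"
  shows "nerve_differential m x \<in> cover_chains X A m (p - 1) q"
  unfolding cover_chains_iff
proof (intro allI impI)
  fix \<tau> s assume "nerve_differential m x (\<tau>, s) \<noteq> 0"
  then have "boundary_on {0..<m} (\<lambda>\<sigma>. x (\<sigma>, s)) \<tau> \<noteq> 0"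
    unfolding nerve_differential_def by simp
  then obtain i where i: "i \<in> {0..<m} - \<tau>" "x (insert i \<tau>, s) \<noteq> 0"
    using boundary_on_nonzero by blast
  then have \<sigma>: "insert i \<tau> \<in> nerve m A" "s \<in> inter_cover X A (insert i \<tau>)"
    "int (card (insert i \<tau>)) = p + 1" "int (card s) = q + 1"
    using x unfolding cover_chains_iff by blast+
  have "finite \<tau>"
    using finite_nerve_face[OF \<sigma>(1)] by simp
  then have "card (insert i \<tau>) = Suc (card \<tau>)"
    using i(1) by simp
  then have "int (card \<tau>) = p - 1 + 1"
    using \<sigma>(3) by simp
  moreover have "\<tau> \<in> nerve m A"
    using nerve_face_subset[OF \<sigma>(1) subset_insertI] .
  moreover have "s \<in> inter_cover X A \<tau>"
    using \<sigma>(2) inter_cover_antimono[OF subset_insertI] by blast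
  ultimately show "\<tau> \<in> nerve m A \<and> s \<in> inter_cover X A \<tau> \<and> int (card \<tau>) = p - 1 + 1 \<and> int (card s) = q + 1"
    using \<sigma>(4) by blast
qed

lemma space_differential_cover_chains:
  assumes x: "x \<in> cover_chains X A m p q"
  shows "space_differential X x \<in> cover_chains X A m p (q - 1)"
  unfolding cover_chains_iff
proof (intro allI impI)
  fix \<sigma> t assume "space_differential X x (\<sigma>, t) \<noteq> 0"
  then have "boundary_on (\<Union>X) (\<lambda>s. x (\<sigma>, s)) t \<noteq> 0"
    unfolding space_differential_def by simp
  then obtain v where v: "v \<in> \<Union>X - t" "x (\<sigma>, insert v t) \<noteq> 0"
    using boundary_on_nonzero by blast
  then have \<sigma>: "\<sigma> \<in> nerve m A" "insert v t \<in> inter_cover X A \<sigma>"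
    "int (card \<sigma>) = p + 1" "int (card (insert v t)) = q + 1"
    using x unfolding cover_chains_iff by blast+
  have K: "simplicial_complex (inter_cover X A \<sigma>)"
    using simplicial_complex_inter_cover nerve_subset[OF \<sigma>(1)] .
  then have "t \<in> inter_cover X A \<sigma>" "finite (insert v t)"
    using \<sigma>(2) subset_insertI unfolding simplicial_complex_def by blast+
  moreover have "int (card t) = q - 1 + 1"
    using \<sigma>(4) v(1) calculation(2) by simp
  ultimately show "\<sigma> \<in> nerve m A \<and> t \<in> inter_cover X A \<sigma> \<and> int (card \<sigma>) = p + 1 \<and> int (card t) = q - 1 + 1"
    using \<sigma>(1,3) by blast
qed

lemma nerve_differential_twice:
  assumes "x \<in> cover_chains X A m p q"
  shows "nerve_differential m (nerve_differential m x) = 0"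
proof -
  have "boundary_on {0..<m} (boundary_on {0..<m} (\<lambda>\<sigma>. x (\<sigma>, s))) = (\<lambda>_. 0)" for s
    by (rule boundary_on_boundary_on) (use cover_chains_infinite(1)[OF assms] in auto)
  then show ?thesis
    unfolding nerve_differential_def by (simp add: fun_eq_iff)
qed

lemma space_differential_twice:
  assumes "x \<in> cover_chains X A m p q"
  shows "space_differential X (space_differential X x) = 0"
proof -
  have "boundary_on (\<Union>X) (boundary_on (\<Union>X) (\<lambda>s. x (\<sigma>, s))) = (\<lambda>_. 0)" for \<sigma>
    by (rule boundary_on_boundary_on[OF finite_vertices]) (use cover_chains_infinite(2)[OF assms] in auto)
  then show ?thesis
    unfolding space_differential_def by (simp add: fun_eq_iff)
qed

lemma nerve_differential_space_differential_commute:
  "nerve_differential m (space_differential X x) = space_differential X (nerve_differential m x)"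
  by (auto simp: fun_eq_iff nerve_differential_def space_differential_def boundary_on_def
      sum_distrib_left mult.left_commute intro: sum.swap)

lemma double_complex_cover_chains:
  "double_complex fun_scale (cover_chains X A m :: int \<Rightarrow> int \<Rightarrow> (nat set \<times> 'v set \<Rightarrow> 'k::field) set)
     (nerve_differential m) (space_differential X)"
  by (intro double_complex.intro vector_space_fun_scale double_complex_axioms.intro
      subspace_cover_chains finite_dimensional_cover_chains cover_chains_vanish linear_nerve_differential
      linear_space_differential nerve_differential_cover_chains space_differential_cover_chains
      nerve_differential_twice space_differential_twice nerve_differential_space_differential_commute)

definition cover_index :: "'v set \<Rightarrow> nat" where
  "cover_index s = (LEAST i. i < m \<and> s \<in> A i)"

lemma cover_index:
  assumes "s \<in> X"
  shows "cover_index s < m \<and> s \<in> A (cover_index s)"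
proof -
  have "\<exists>i. i < m \<and> s \<in> A i"
    using assms covers by blast
  then show ?thesis
    unfolding cover_index_def by (rule LeastI_ex)
qed

text \<open>Contracting homotopy of the rows \<open>q \<ge> 0\<close>: each nonempty face \<open>s\<close> is coned off from one
  fixed index \<open>i\<close> with \<open>s \<in> A i\<close>.\<close>

definition cover_cone :: "(nat set \<times> 'v set \<Rightarrow> 'k::field) \<Rightarrow> (nat set \<times> 'v set \<Rightarrow> 'k)" where
  "cover_cone x = (\<lambda>(\<sigma>, s). cone (cover_index s) (\<lambda>\<sigma>'. x (\<sigma>', s)) \<sigma>)"

lemma cover_index_support:
  assumes "0 \<le> q" "x \<in> cover_chains X A m p q" "x (\<sigma>, s) \<noteq> 0"
  shows "cover_index s < m" "s \<in> A (cover_index s)" "s \<noteq> {}"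
proof -
  have "s \<in> inter_cover X A \<sigma>" "int (card s) = q + 1"
    using assms(2,3) unfolding cover_chains_iff by blast+
  then show "cover_index s < m" "s \<in> A (cover_index s)" "s \<noteq> {}"
    using cover_index assms(1) unfolding inter_cover_def by force+
qed

lemma cover_cone_cover_chains:
  assumes q: "0 \<le> q" and x: "x \<in> cover_chains X A m p q"
  shows "cover_cone x \<in> cover_chains X A m (p + 1) q"
  unfolding cover_chains_iff
proof (intro allI impI)
  fix \<sigma> s assume "cover_cone x (\<sigma>, s) \<noteq> 0"
  then have a: "cover_index s \<in> \<sigma>" "x (\<sigma> - {cover_index s}, s) \<noteq> 0"
    unfolding cover_cone_def cone_def by (auto split: if_splits)
  let ?a = "cover_index s" and ?\<tau> = "\<sigma> - {cover_index s}"
  have \<tau>: "?\<tau> \<in> nerve m A" "s \<in> inter_cover X A ?\<tau>" "int (card ?\<tau>) = p + 1" "int (card s) = q + 1"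
    using x a(2) unfolding cover_chains_iff by blast+
  note index = cover_index_support[OF q x a(2)]
  have \<sigma>: "insert ?a ?\<tau> = \<sigma>"
    using a(1) by blast
  have "s \<in> inter_cover X A (insert ?a ?\<tau>)"
    using \<tau>(2) index(2) unfolding inter_cover_insert by blast
  then have s: "s \<in> inter_cover X A \<sigma>"
    unfolding \<sigma> .
  have "\<sigma> \<subseteq> {0..<m}"
    using nerve_subset[OF \<tau>(1)] index(1) by auto
  then have "\<sigma> \<in> nerve m A"
    unfolding nerve_iff using s index(3) by blast
  moreover have "card (insert ?a ?\<tau>) = Suc (card ?\<tau>)"
    by (rule card_insert_disjoint[OF finite_nerve_face[OF \<tau>(1)]]) simp
  then have "int (card \<sigma>) = p + 1 + 1"
    unfolding \<sigma> using \<tau>(3) by simp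
  ultimately show "\<sigma> \<in> nerve m A \<and> s \<in> inter_cover X A \<sigma> \<and> int (card \<sigma>) = p + 1 + 1 \<and> int (card s) = q + 1"
    using \<tau>(4) s by blast
qed

lemma nerve_differential_cover_cone:
  assumes q: "0 \<le> q" and x: "x \<in> cover_chains X A m p q" and dx: "nerve_differential m x = 0"
  shows "nerve_differential m (cover_cone x) = x"
proof
  fix z :: "nat set \<times> 'v set"
  obtain \<tau> s where z: "z = (\<tau>, s)"
    by (cases z)
  show "nerve_differential m (cover_cone x) z = x z"
  proof (cases "\<exists>\<sigma>. x (\<sigma>, s) \<noteq> 0")
    case True
    then have "cover_index s \<in> {0..<m}"
      using cover_index_support(1)[OF q x] by auto
    moreover have "boundary_on {0..<m} (\<lambda>\<sigma>. x (\<sigma>, s)) t = 0" for t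
      using fun_cong[OF dx, of "(t, s)"] unfolding nerve_differential_def by simp
    ultimately have "boundary_on {0..<m} (cone (cover_index s) (\<lambda>\<sigma>. x (\<sigma>, s))) = (\<lambda>\<sigma>. x (\<sigma>, s))"
      using boundary_on_cone_cycle[OF finite_atLeastLessThan _ cover_chains_infinite(1)[OF x]]
      by (simp add: fun_eq_iff)
    then show ?thesis
      unfolding z nerve_differential_def cover_cone_def by (simp add: fun_eq_iff)
  next
    case False
    then have "(\<lambda>\<sigma>. x (\<sigma>, s)) = (\<lambda>_. 0)"
      by auto
    then show ?thesis
      unfolding z nerve_differential_def cover_cone_def using False by simp
  qed
qed

lemma nerve_differential_exact:
  "0 \<le> q \<Longrightarrow> x \<in> cover_chains X A m p q \<Longrightarrow> nerve_differential m x = 0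
    \<Longrightarrow> x \<in> nerve_differential m ` cover_chains X A m (p + 1) q"
  using cover_cone_cover_chains nerve_differential_cover_cone by (metis image_eqI)

lemma slice_chains:
  "x \<in> cover_chains X A m p q \<Longrightarrow> (\<lambda>s. x (\<sigma>, s)) \<in> chains (inter_cover X A \<sigma>) q"
  unfolding cover_chains_iff chains_def by blast

lemma space_differential_slice:
  assumes "x \<in> cover_chains X A m p q"
  shows "space_differential X x (\<sigma>, t) = boundary (inter_cover X A \<sigma>) (\<lambda>s. x (\<sigma>, s)) t"
proof -
  have "boundary_on (\<Union>X) (\<lambda>s. x (\<sigma>, s)) = boundary_on (\<Union>(inter_cover X A \<sigma>)) (\<lambda>s. x (\<sigma>, s))"
    by (rule boundary_on_mono_vertices)
      (use finite_vertices slice_chains[OF assms, of \<sigma>] in \<open>auto simp: inter_cover_def chains_def\<close>)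
  then show ?thesis
    unfolding space_differential_def boundary_eq_boundary_on by simp
qed

lemma slice_bounds:
  fixes x :: "nat set \<times> 'v set \<Rightarrow> 'k::field"
  assumes x: "x \<in> cover_chains X A m p q" "space_differential X x = 0"
    and "cycles (inter_cover X A \<sigma>) q \<subseteq> (bounding (inter_cover X A \<sigma>) q :: ('v set \<Rightarrow> 'k) set)"
  shows "\<exists>b \<in> chains (inter_cover X A \<sigma>) (q + 1). boundary (inter_cover X A \<sigma>) b = (\<lambda>s. x (\<sigma>, s))"
proof -
  have "boundary (inter_cover X A \<sigma>) (\<lambda>s. x (\<sigma>, s)) t = 0" for t
    using space_differential_slice[OF x(1)] fun_cong[OF x(2), of "(\<sigma>, t)"] by simp
  then have "(\<lambda>s. x (\<sigma>, s)) \<in> cycles (inter_cover X A \<sigma>) q"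
    using slice_chains[OF x(1)] unfolding cycles_def by auto
  then have "(\<lambda>s. x (\<sigma>, s)) \<in> bounding (inter_cover X A \<sigma>) q"
    using assms(3) by blast
  then show ?thesis
    unfolding bounding_def by (simp add: image_iff eq_commute)
qed

lemma space_differential_exact:
  fixes x :: "nat set \<times> 'v set \<Rightarrow> 'k::field"
  assumes x: "x \<in> cover_chains X A m p q" "space_differential X x = 0"
    and slices: "\<And>\<sigma>. \<sigma> \<in> nerve m A \<Longrightarrow> int (card \<sigma>) = p + 1 \<Longrightarrow>
      cycles (inter_cover X A \<sigma>) q \<subseteq> (bounding (inter_cover X A \<sigma>) q :: ('v set \<Rightarrow> 'k) set)"
  shows "x \<in> space_differential X ` cover_chains X A m p (q + 1)"
proof -
  let ?P = "\<lambda>\<sigma>. \<sigma> \<in> nerve m A \<and> int (card \<sigma>) = p + 1"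
  have "\<exists>b \<in> chains (inter_cover X A \<sigma>) (q + 1). boundary (inter_cover X A \<sigma>) b = (\<lambda>s. x (\<sigma>, s))"
    if "?P \<sigma>" for \<sigma>
    using slice_bounds[OF x slices] that by blast
  then obtain b where b: "\<And>\<sigma>. ?P \<sigma> \<Longrightarrow> b \<sigma> \<in> chains (inter_cover X A \<sigma>) (q + 1)
      \<and> boundary (inter_cover X A \<sigma>) (b \<sigma>) = (\<lambda>s. x (\<sigma>, s))"
    by metis
  define B where "B = (\<lambda>(\<sigma>, s). if ?P \<sigma> then b \<sigma> s else 0)"
  have B: "B \<in> cover_chains X A m p (q + 1)"
    unfolding cover_chains_iff
  proof (intro allI impI)
    fix \<sigma> s assume "B (\<sigma>, s) \<noteq> 0"
    then have "?P \<sigma>" "b \<sigma> s \<noteq> 0"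
      unfolding B_def by (auto split: if_splits)
    then show "\<sigma> \<in> nerve m A \<and> s \<in> inter_cover X A \<sigma> \<and> int (card \<sigma>) = p + 1 \<and> int (card s) = q + 1 + 1"
      using b[of \<sigma>] unfolding chains_def by auto
  qed
  have "space_differential X B = x"
  proof
    fix z :: "nat set \<times> 'v set"
    obtain \<sigma> t where z: "z = (\<sigma>, t)"
      by (cases z)
    have "(\<lambda>s. B (\<sigma>, s)) = (if ?P \<sigma> then b \<sigma> else (\<lambda>_. 0))"
      unfolding B_def by auto
    moreover have "x (\<sigma>, t) = 0" if "\<not> ?P \<sigma>"
      using x(1) that unfolding cover_chains_iff by blast
    ultimately show "space_differential X B z = x z"
      unfolding z space_differential_slice[OF B] using b[of \<sigma>]
      by (auto simp: boundary_eq_boundary_on)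
  qed
  then show ?thesis
    using B by blast
qed

lemma vertex_in_inter_cover:
  assumes "\<sigma> \<in> nerve m A" "\<sigma> \<noteq> {}"
  obtains v where "{v} \<in> inter_cover X A \<sigma>"
proof -
  obtain s v where "s \<in> inter_cover X A \<sigma>" "v \<in> s"
    using assms unfolding nerve_iff by blast
  moreover have "simplicial_complex (inter_cover X A \<sigma>)"
    using simplicial_complex_inter_cover nerve_subset[OF assms(1)] .
  ultimately show ?thesis
    using that unfolding simplicial_complex_def by blast
qed

lemma cover_chains_column:
  "cover_chains X A m (-1) q = (column_embedding ` chains X q :: (nat set \<times> 'v set \<Rightarrow> 'k::field) set)"
proof (intro equalityI subsetI)
  fix x :: "nat set \<times> 'v set \<Rightarrow> 'k" assume x: "x \<in> cover_chains X A m (-1) q"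
  have "x (\<sigma>, s) = 0" if "\<sigma> \<noteq> {}" for \<sigma> s
    using x that finite_nerve_face unfolding cover_chains_iff by fastforce
  then have "x = column_embedding (\<lambda>s. x ({}, s))"
    by (auto simp: column_embedding_def fun_eq_iff)
  moreover have "(\<lambda>s. x ({}, s)) \<in> chains X q"
    using slice_chains[OF x, of "{}"] by simp
  ultimately show "x \<in> column_embedding ` chains X q"
    by blast
next
  fix x :: "nat set \<times> 'v set \<Rightarrow> 'k" assume "x \<in> column_embedding ` chains X q"
  then obtain c where c: "c \<in> chains X q" "x = column_embedding c"
    by blast
  show "x \<in> cover_chains X A m (-1) q"
    unfolding cover_chains_iff
  proof (intro allI impI)
    fix \<sigma> s assume "x (\<sigma>, s) \<noteq> 0"
    then have "\<sigma> = {}" "c s \<noteq> 0"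
      using c(2) unfolding column_embedding_def by (auto split: if_splits)
    then show "\<sigma> \<in> nerve m A \<and> s \<in> inter_cover X A \<sigma> \<and> int (card \<sigma>) = -1 + 1 \<and> int (card s) = q + 1"
      using c(1) unfolding chains_def by (simp add: nerve_def)
  qed
qed

lemma space_differential_column_embedding:
  "space_differential X (column_embedding c) = column_embedding (boundary X c)"
proof
  fix z :: "nat set \<times> 'v set"
  obtain \<sigma> t where z: "z = (\<sigma>, t)"
    by (cases z)
  show "space_differential X (column_embedding c) z = column_embedding (boundary X c) z"
    unfolding z space_differential_def column_embedding_def boundary_eq_boundary_on
    by (cases "\<sigma> = {}") simp_all
qed

lemma cover_chains_row:
  "cover_chains X A m p (-1) = (row_embedding ` chains (nerve m A) p :: (nat set \<times> 'v set \<Rightarrow> 'k::field) set)"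
proof (intro equalityI subsetI)
  fix x :: "nat set \<times> 'v set \<Rightarrow> 'k" assume x: "x \<in> cover_chains X A m p (-1)"
  have "x (\<sigma>, s) = 0" if "s \<noteq> {}" for \<sigma> s
  proof (rule ccontr)
    assume nz: "x (\<sigma>, s) \<noteq> 0"
    then have "int (card s) = -1 + 1" "finite s"
      using x cover_chains_infinite(2)[OF x] unfolding cover_chains_iff by blast+
    then show False
      using that by simp
  qed
  then have "x = row_embedding (\<lambda>\<sigma>. x (\<sigma>, {}))"
    by (auto simp: row_embedding_def fun_eq_iff)
  moreover have "(\<lambda>\<sigma>. x (\<sigma>, {})) \<in> chains (nerve m A) p"
    using x unfolding cover_chains_iff chains_def by blast
  ultimately show "x \<in> row_embedding ` chains (nerve m A) p"
    by blast
next
  fix x :: "nat set \<times> 'v set \<Rightarrow> 'k" assume "x \<in> row_embedding ` chains (nerve m A) p"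
  then obtain c where c: "c \<in> chains (nerve m A) p" "x = row_embedding c"
    by blast
  show "x \<in> cover_chains X A m p (-1)"
    unfolding cover_chains_iff
  proof (intro allI impI)
    fix \<sigma> s assume "x (\<sigma>, s) \<noteq> 0"
    then have "s = {}" "c \<sigma> \<noteq> 0"
      using c(2) unfolding row_embedding_def by (auto split: if_splits)
    moreover have "\<sigma> \<in> nerve m A" "int (card \<sigma>) = p + 1"
      using c(1) calculation(2) unfolding chains_def by blast+
    moreover have "{} \<in> inter_cover X A \<sigma>"
      using simplicial_complex_inter_cover[OF nerve_subset[OF calculation(3)]]
      unfolding simplicial_complex_def by blast
    ultimately show "\<sigma> \<in> nerve m A \<and> s \<in> inter_cover X A \<sigma> \<and> int (card \<sigma>) = p + 1 \<and> int (card s) = -1 + 1"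
      by simp
  qed
qed

lemma nerve_differential_row_embedding:
  assumes "c \<in> chains (nerve m A) p"
  shows "nerve_differential m (row_embedding c) = row_embedding (boundary (nerve m A) c)"
proof -
  have "boundary_on {0..<m} c = boundary_on (\<Union>(nerve m A)) c"
    by (rule boundary_on_mono_vertices) (use nerve_subset assms in \<open>auto simp: chains_def\<close>)
  then show ?thesis
    by (auto simp: fun_eq_iff nerve_differential_def row_embedding_def boundary_eq_boundary_on)
qed

lemma column_cycles:
  "{x \<in> cover_chains X A m (-1) q. space_differential X x = 0}
    = (column_embedding ` cycles X q :: (nat set \<times> 'v set \<Rightarrow> 'k::field) set)"
proof -
  have "{x \<in> column_embedding ` chains X q. space_differential X x = 0}
      = column_embedding ` {c \<in> chains X q. boundary X c = (0 :: 'v set \<Rightarrow> 'k)}"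
    by (rule image_kernel_eq[OF inj_column_embedding],
        simp add: column_embedding_def zero_fun_def fun_eq_iff,
        rule space_differential_column_embedding)
  then show ?thesis
    unfolding cover_chains_column cycles_def by (simp add: zero_fun_def)
qed

lemma column_boundaries:
  "space_differential X ` cover_chains X A m (-1) (q + 1)
    = (column_embedding ` bounding X q :: (nat set \<times> 'v set \<Rightarrow> 'k::field) set)"
  unfolding cover_chains_column bounding_def image_image space_differential_column_embedding ..

lemma row_cycles:
  "{x \<in> cover_chains X A m p (-1). nerve_differential m x = 0}
    = (row_embedding ` cycles (nerve m A) p :: (nat set \<times> 'v set \<Rightarrow> 'k::field) set)"
proof -
  have "{x \<in> row_embedding ` chains (nerve m A) p. nerve_differential m x = 0}
      = (row_embedding ` {c \<in> chains (nerve m A) p. boundary (nerve m A) c = 0}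
          :: (nat set \<times> 'v set \<Rightarrow> 'k) set)"
    by (rule image_kernel_eq[OF inj_row_embedding],
        simp add: row_embedding_def zero_fun_def fun_eq_iff,
        erule nerve_differential_row_embedding)
  then show ?thesis
    unfolding cover_chains_row cycles_def by (simp add: zero_fun_def)
qed

lemma row_boundaries:
  "nerve_differential m ` cover_chains X A m (p + 1) (-1)
    = (row_embedding ` bounding (nerve m A) p :: (nat set \<times> 'v set \<Rightarrow> 'k::field) set)"
  unfolding cover_chains_row bounding_def image_image
  by (rule image_cong[OF refl]) (simp add: nerve_differential_row_embedding)

lemma space_differential_exact_antidiagonal:
  fixes x :: "nat set \<times> 'v set \<Rightarrow> 'k::field"
  assumes acyclic: "\<forall>\<sigma>\<in>nerve m A. 1 \<le> card \<sigma> \<and> card \<sigma> \<le> k + 1 \<longrightarrow>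
      reduced_betti TYPE('k) (inter_family A \<sigma>) (int k - int (card \<sigma>) + 1) = 0"
    and p: "0 \<le> p" "p \<le> int k + 1"
    and x: "x \<in> cover_chains X A m p (int k - p)" "space_differential X x = 0"
  shows "x \<in> space_differential X ` cover_chains X A m p (int k - p + 1)"
proof (rule space_differential_exact[OF x])
  fix \<sigma> assume \<sigma>: "\<sigma> \<in> nerve m A" "int (card \<sigma>) = p + 1"
  then have "\<sigma> \<noteq> {}"
    using p by auto
  have K: "simplicial_complex (inter_cover X A \<sigma>)"
    using simplicial_complex_inter_cover nerve_subset[OF \<sigma>(1)] .
  show "cycles (inter_cover X A \<sigma>) (int k - p) \<subseteq> (bounding (inter_cover X A \<sigma>) (int k - p) :: ('v set \<Rightarrow> 'k) set)"
  proof (cases "p = int k + 1")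
    case True
    obtain v where "{v} \<in> inter_cover X A \<sigma>"
      using vertex_in_inter_cover[OF \<sigma>(1) \<open>\<sigma> \<noteq> {}\<close>] .
    then show ?thesis
      using cycles_minus1_subset_bounding[OF K] True by simp
  next
    case False
    then have "1 \<le> card \<sigma>" "card \<sigma> \<le> k + 1" "int k - int (card \<sigma>) + 1 = int k - p"
      using \<sigma>(2) p by linarith+
    then have "reduced_betti TYPE('k) (inter_family A \<sigma>) (int k - p) = 0"
      using acyclic \<sigma>(1) by metis
    then show ?thesis
      using cycles_subset_bounding_if_reduced_betti_eq_0[OF K]
        inter_cover_eq_inter_family[OF \<open>\<sigma> \<noteq> {}\<close> nerve_subset[OF \<sigma>(1)]] by simp
  qed
qed

theorem reduced_betti_nerve_le:
  assumes acyclic: "\<forall>\<sigma>\<in>nerve m A. 1 \<le> card \<sigma> \<and> card \<sigma> \<le> k + 1 \<longrightarrow>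
      reduced_betti TYPE('k::field) (inter_family A \<sigma>) (int k - int (card \<sigma>) + 1) = 0"
  shows "reduced_betti TYPE('k) (nerve m A) (int k + 1) \<le> reduced_betti TYPE('k) X (int k + 1)
    \<and> reduced_betti TYPE('k) X (int k) \<le> reduced_betti TYPE('k) (nerve m A) (int k)"
proof -
  interpret C: double_complex fun_scale "cover_chains X A m :: int \<Rightarrow> int \<Rightarrow> (nat set \<times> 'v set \<Rightarrow> 'k) set"
    "nerve_differential m" "space_differential X"
    by (rule double_complex_cover_chains)
  have rows: "C.row_exact p q" if "-1 \<le> p" "0 \<le> q" for p q
    unfolding C.row_exact_def C.Zh_def C.Bh_def using nerve_differential_exact[OF that(2)] by blast
  have cols: "C.col_exact p (int k - p)" if "0 \<le> p" "p \<le> int k + 1" for p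
    unfolding C.col_exact_def C.Zv_def C.Bv_def
    using space_differential_exact_antidiagonal[OF acyclic that] by blast
  have "C.dim (column_embedding ` S) = vector_space.dim fun_scale S" for S :: "('v set \<Rightarrow> 'k) set"
    by (rule dim_image_eq_if_inj[OF vector_space_fun_scale vector_space_fun_scale linear_column_embedding
          inj_column_embedding])
  then have betti_X: "reduced_betti TYPE('k) X q = C.dim (C.Zv (-1) q) - C.dim (C.Bv (-1) q)" for q
    unfolding reduced_betti_def chain_scale_eq_fun_scale C.Zv_def C.Bv_def column_cycles column_boundaries
    by simp
  have "C.dim (row_embedding ` S) = vector_space.dim fun_scale S" for S :: "(nat set \<Rightarrow> 'k) set"
    by (rule dim_image_eq_if_inj[OF vector_space_fun_scale vector_space_fun_scale linear_row_embedding
          inj_row_embedding])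
  then have betti_N: "reduced_betti TYPE('k) (nerve m A) p = C.dim (C.Zh p (-1)) - C.dim (C.Bh p (-1))" for p
    unfolding reduced_betti_def chain_scale_eq_fun_scale C.Zh_def C.Bh_def row_cycles row_boundaries
    by simp
  have "C.dim (C.Bv (-1) q) \<le> C.dim (C.Zv (-1) q)" "C.dim (C.Bh q (-1)) \<le> C.dim (C.Zh q (-1))" for q
    by (rule C.dim_mono_finite_dimensional[OF C.finite_dimensional_Zv C.Bv_subset_Zv],
        rule C.dim_mono_finite_dimensional[OF C.finite_dimensional_Zh C.Bh_subset_Zh])
  note B_le_Z = this
  show ?thesis
    using C.zigzag_quotient_dims[OF rows cols] B_le_Z[of "int k"] B_le_Z[of "int k + 1"]
    unfolding betti_X betti_N by linarith
qed

end

theorem theorem1: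
  fixes X :: "('v::linorder) set set"
    and A :: "nat \<Rightarrow> 'v set set"
    and m :: nat and k :: nat
  assumes "simplicial_complex X"
    and "\<forall>i<m. subcomplex (A i) X"
    and "(\<Union>i<m. A i) = X"
    and "\<forall>\<sigma>\<in>nerve m A. 1 \<le> card \<sigma> \<and> card \<sigma> \<le> k + 1 \<longrightarrow>
           reduced_betti TYPE('k::field) (inter_family A \<sigma>) (int k - int (card \<sigma>) + 1) = 0"
  shows "reduced_betti TYPE('k) (nerve m A) (int k + 1) \<le> reduced_betti TYPE('k) X (int k + 1)
         \<and> reduced_betti TYPE('k) X (int k) \<le> reduced_betti TYPE('k) (nerve m A) (int k)"
proof -
  interpret simplicial_cover X A m
    using assms(1-3) by unfold_locales auto
  show ?thesis
    by (rule reduced_betti_nerve_le[OF assms(4)])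
qed

end
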